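(* Let $\mathcal O$ be a complete discrete valuation ring with uniformizer $\varpi$ and fraction field $E$. Let $T,\tilde T$ be reduced finite flat local $\mathcal O$-algebras with $\mathcal O$-algebra maps $\lambda:T\to\mathcal O$ and $\tilde\lambda:\tilde T\to\mathcal O$, and corresponding idempotents $e\in T\otimes E$ and $\tilde e\in\tilde T\otimes E$. Let $M_1$ be a $T$-module and $M_2$ a $\tilde T$-module, both finite free over $\mathcal O$. Let $[\,,\,]:M_1\times M_2\to\mathcal O$ be a perfect $\mathcal O$-bilinear pairing (both induced maps $M_1\to\mathrm{Hom}_{\mathcal O}(M_2,\mathcal O)$ and $M_2\to\mathrm{Hom}_{\mathcal O}(M_1,\mathcal O)$ are isomorphisms). Assume that its $E$-bilinear extension satisfies \[[eM_1,(1-\tilde e)M_2]=0\quad\text{and}\quad[(1-e)M_1,\tilde eM_2]=0.\] (a) Then $[\,,\,]$ induces a perfect $\mathcal O$-bilinear pairing $C_0^\lambda(M_1)\times C_0^{\tilde\lambda}(M_2)\to E/\mathcal O$, and $\eta_\lambda(M_1)=\eta_{\tilde\lambda}(M_2)$. (b) If $M_1[\ker\lambda]$ and $M_2[\ker\tilde\lambda]$ are both free of rank $1$ over $\mathcal O$ with bases $\delta_1,\delta_2$, then $\eta_\lambda(M_1)=\eta_{\tilde\lambda}(M_2)=([\delta_1,\delta_2])$.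
   Context: For a reduced finite flat local $\mathcal O$-algebra $T$ with $\lambda:T\to\mathcal O$, there is a canonical decomposition $T\otimes E\cong E\times T^c_E$ whose first projection is $\lambda\otimes E$; $e$ corresponds to $(1,0)$. For a $T$-module $M$ finite free over $\mathcal O$: $C_0^\lambda(M)=eM/(eM\cap M)$ (inside $M\otimes E$), $\eta_\lambda(M)=\mathrm{Fitt}_{\mathcal O}(C_0^\lambda(M))$, and $M[\ker\lambda]=\{m\in M:(\ker\lambda)m=0\}$. *)

theory Defs
  imports "Jordan_Normal_Form.Determinant"
begin

(* The fraction field E is the type 'e (a field), Ov is a subset of it.
   For a finite flat (= finite free) Ov-algebra T, the E-algebra T \<otimes> E is modelled by a
   commutative ring type 'a together with a ring homomorphism iota : E \<rightarrow> T\<otimes>E, and T is an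
   Ov-lattice inside it.  Likewise a T-module M, finite free over Ov, lives inside
   M \<otimes> E, modelled as a module over the ring T \<otimes> E (E acting through iota). *)

definition O_mult :: "'e::comm_ring_1 set \<Rightarrow> 'e \<Rightarrow> 'e set" where
  "O_mult Ov x = (\<lambda>a. a * x) ` Ov"

definition complete_dvr :: "'e::field set \<Rightarrow> bool" where
  "complete_dvr Ov \<longleftrightarrow> (\<exists>(v::'e \<Rightarrow> int) w.
     (\<forall>x y. x \<noteq> 0 \<longrightarrow> y \<noteq> 0 \<longrightarrow> v (x * y) = v x + v y) \<and>
     (\<forall>x y. x \<noteq> 0 \<longrightarrow> y \<noteq> 0 \<longrightarrow> x + y \<noteq> 0 \<longrightarrow> min (v x) (v y) \<le> v (x + y)) \<and>
     w \<noteq> 0 \<and> v w = 1 \<and>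
     Ov = {x. x = 0 \<or> 0 \<le> v x} \<and>
     (\<forall>s::nat \<Rightarrow> 'e. (\<forall>n. s n \<in> Ov) \<longrightarrow>
        (\<forall>k. \<exists>N. \<forall>m\<ge>N. \<forall>n\<ge>N. s m - s n \<in> O_mult Ov (w ^ k)) \<longrightarrow>
        (\<exists>x\<in>Ov. \<forall>k. \<exists>N. \<forall>n\<ge>N. s n - x \<in> O_mult Ov (w ^ k))))"

definition O_basis :: "'e::field set \<Rightarrow> ('e \<Rightarrow> 'v::ab_group_add \<Rightarrow> 'v) \<Rightarrow> nat \<Rightarrow> (nat \<Rightarrow> 'v) \<Rightarrow> 'v set \<Rightarrow> bool" where
  "O_basis Ov sc r b L \<longleftrightarrow> inj_on b {..<r} \<and> \<not> module.dependent sc (b ` {..<r}) \<and>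
     L = {(\<Sum>i<r. sc (c i) (b i)) | c. \<forall>i<r. c i \<in> Ov}"

definition full_O_lattice :: "'e::field set \<Rightarrow> ('e \<Rightarrow> 'v::ab_group_add \<Rightarrow> 'v) \<Rightarrow> 'v set \<Rightarrow> bool" where
  "full_O_lattice Ov sc L \<longleftrightarrow> (\<exists>r b. O_basis Ov sc r b L \<and> module.span sc (b ` {..<r}) = UNIV)"

definition ring_hom_fun :: "('e::comm_ring_1 \<Rightarrow> 'a::comm_ring_1) \<Rightarrow> bool" where
  "ring_hom_fun f \<longleftrightarrow> f 1 = 1 \<and> (\<forall>x y. f (x + y) = f x + f y) \<and> (\<forall>x y. f (x * y) = f x * f y)"

definition sub_ideal :: "'a::comm_ring_1 set \<Rightarrow> 'a set \<Rightarrow> bool" where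
  "sub_ideal T I \<longleftrightarrow> I \<subseteq> T \<and> 0 \<in> I \<and> (\<forall>x\<in>I. \<forall>y\<in>I. x + y \<in> I) \<and> (\<forall>x\<in>I. - x \<in> I) \<and>
     (\<forall>t\<in>T. \<forall>x\<in>I. t * x \<in> I)"

definition maximal_sub_ideal :: "'a::comm_ring_1 set \<Rightarrow> 'a set \<Rightarrow> bool" where
  "maximal_sub_ideal T I \<longleftrightarrow> sub_ideal T I \<and> I \<noteq> T \<and>
     (\<forall>J. sub_ideal T J \<longrightarrow> I \<subseteq> J \<longrightarrow> J = I \<or> J = T)"

definition reduced_finite_flat_local_algebra ::
  "'e::field set \<Rightarrow> ('e \<Rightarrow> 'a::comm_ring_1) \<Rightarrow> 'a set \<Rightarrow> bool" where
  "reduced_finite_flat_local_algebra Ov iota T \<longleftrightarrow>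
     ring_hom_fun iota \<and>
     1 \<in> T \<and> (\<forall>x\<in>T. \<forall>y\<in>T. x + y \<in> T \<and> x * y \<in> T) \<and> (\<forall>x\<in>T. - x \<in> T) \<and>
     (\<forall>c\<in>Ov. \<forall>t\<in>T. iota c * t \<in> T) \<and>
     full_O_lattice Ov (\<lambda>c x. iota c * x) T \<and>
     (\<forall>t\<in>T. \<forall>n. t ^ n = 0 \<longrightarrow> t = 0) \<and>
     (\<exists>!I. maximal_sub_ideal T I)"

definition O_algebra_hom_to_O ::
  "'e::field set \<Rightarrow> ('e \<Rightarrow> 'a::comm_ring_1) \<Rightarrow> 'a set \<Rightarrow> ('a \<Rightarrow> 'e) \<Rightarrow> bool" where
  "O_algebra_hom_to_O Ov iota T lam \<longleftrightarrow> (\<forall>t\<in>T. lam t \<in> Ov) \<and> lam 1 = 1 \<and>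
     (\<forall>x\<in>T. \<forall>y\<in>T. lam (x + y) = lam x + lam y \<and> lam (x * y) = lam x * lam y) \<and>
     (\<forall>c\<in>Ov. \<forall>t\<in>T. lam (iota c * t) = c * lam t)"

text \<open>e \<in> T \<otimes> E is the idempotent corresponding to (1,0) under T \<otimes> E \<cong> E \<times> T^c_E whose first
  projection is lam \<otimes> E: e is a nonzero idempotent and multiplication by e on T is
  (lam \<otimes> E) followed by E \<cong> E e, i.e. e t = (lam t) e.  (This determines e uniquely.)\<close>
definition lambda_idempotent ::
  "('e \<Rightarrow> 'a::comm_ring_1) \<Rightarrow> 'a set \<Rightarrow> ('a \<Rightarrow> 'e) \<Rightarrow> 'a \<Rightarrow> bool" where
  "lambda_idempotent iota T lam e \<longleftrightarrow> e * e = e \<and> e \<noteq> 0 \<and> (\<forall>t\<in>T. e * t = iota (lam t) * e)"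

definition lattice_module ::
  "'e::field set \<Rightarrow> ('e \<Rightarrow> 'a::comm_ring_1) \<Rightarrow> 'a set \<Rightarrow> ('a \<Rightarrow> 'v::ab_group_add \<Rightarrow> 'v) \<Rightarrow> 'v set \<Rightarrow> bool" where
  "lattice_module Ov iota T act M \<longleftrightarrow> Modules.module act \<and>
     full_O_lattice Ov (\<lambda>c m. act (iota c) m) M \<and> (\<forall>t\<in>T. \<forall>m\<in>M. act t m \<in> M)"

text \<open>Fitting ideal over Ov of the torsion module L/L', L' \<subseteq> L lattices of the same rank:
  with the presentation given by an Ov-basis b of L (generators) and an Ov-basis b' of L'
  (relations), Fitt_0 is generated by the determinant of the relation matrix.\<close>
definition fitting_ideal_quot ::
  "'e::field set \<Rightarrow> ('e \<Rightarrow> 'v::ab_group_add \<Rightarrow> 'v) \<Rightarrow> 'v set \<Rightarrow> 'v set \<Rightarrow> 'e set" where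
  "fitting_ideal_quot Ov sc L L' = {x. \<exists>r b b' A a. O_basis Ov sc r b L \<and> O_basis Ov sc r b' L' \<and>
      (\<forall>j<r. b' j = (\<Sum>i<r. sc (A i j) (b i))) \<and> a \<in> Ov \<and> x = a * det (mat r r (\<lambda>(i, j). A i j))}"

text \<open>C_0^lam(M) = eM / (eM \<inter> M), represented by the pair (eM, eM \<inter> M).\<close>
definition eM :: "('a \<Rightarrow> 'v \<Rightarrow> 'v) \<Rightarrow> 'a \<Rightarrow> 'v set \<Rightarrow> 'v set" where
  "eM act e M = act e ` M"

definition congruence_eta ::
  "'e::field set \<Rightarrow> ('e \<Rightarrow> 'a::comm_ring_1) \<Rightarrow> ('a \<Rightarrow> 'v::ab_group_add \<Rightarrow> 'v) \<Rightarrow> 'a \<Rightarrow> 'v set \<Rightarrow> 'e set" where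
  "congruence_eta Ov iota act e M =
     fitting_ideal_quot Ov (\<lambda>c m. act (iota c) m) (eM act e M) (eM act e M \<inter> M)"

definition ker_torsion :: "'a set \<Rightarrow> ('a \<Rightarrow> 'e::zero) \<Rightarrow> ('a \<Rightarrow> 'v \<Rightarrow> 'v::zero) \<Rightarrow> 'v set \<Rightarrow> 'v set" where
  "ker_torsion T lam act M = {m \<in> M. \<forall>t\<in>T. lam t = 0 \<longrightarrow> act t m = 0}"

definition E_bilinear :: "('e \<Rightarrow> 'v \<Rightarrow> 'v) \<Rightarrow> ('e \<Rightarrow> 'w \<Rightarrow> 'w) \<Rightarrow> ('v::ab_group_add \<Rightarrow> 'w::ab_group_add \<Rightarrow> 'e::field) \<Rightarrow> bool" where
  "E_bilinear sc1 sc2 P \<longleftrightarrow>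
     (\<forall>x x' y. P (x + x') y = P x y + P x' y) \<and> (\<forall>x y y'. P x (y + y') = P x y + P x y') \<and>
     (\<forall>c x y. P (sc1 c x) y = c * P x y) \<and> (\<forall>c x y. P x (sc2 c y) = c * P x y)"

definition O_linear_form :: "'e::field set \<Rightarrow> ('e \<Rightarrow> 'v \<Rightarrow> 'v) \<Rightarrow> 'v::ab_group_add set \<Rightarrow> ('v \<Rightarrow> 'e) \<Rightarrow> bool" where
  "O_linear_form Ov sc L f \<longleftrightarrow> (\<forall>y\<in>L. f y \<in> Ov) \<and>
     (\<forall>y\<in>L. \<forall>y'\<in>L. f (y + y') = f y + f y') \<and> (\<forall>a\<in>Ov. \<forall>y\<in>L. f (sc a y) = a * f y)"

definition perfect_O_pairing ::
  "'e::field set \<Rightarrow> ('e \<Rightarrow> 'v \<Rightarrow> 'v) \<Rightarrow> ('e \<Rightarrow> 'w \<Rightarrow> 'w) \<Rightarrow> 'v::ab_group_add set \<Rightarrow> 'w::ab_group_add set \<Rightarrow> ('v \<Rightarrow> 'w \<Rightarrow> 'e) \<Rightarrow> bool" where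
  "perfect_O_pairing Ov sc1 sc2 L1 L2 P \<longleftrightarrow>
     (\<forall>x\<in>L1. \<forall>y\<in>L2. P x y \<in> Ov) \<and>
     (\<forall>x\<in>L1. \<forall>x'\<in>L1. (\<forall>y\<in>L2. P x y = P x' y) \<longrightarrow> x = x') \<and>
     (\<forall>f. O_linear_form Ov sc2 L2 f \<longrightarrow> (\<exists>x\<in>L1. \<forall>y\<in>L2. P x y = f y)) \<and>
     (\<forall>y\<in>L2. \<forall>y'\<in>L2. (\<forall>x\<in>L1. P x y = P x y') \<longrightarrow> y = y') \<and>
     (\<forall>f. O_linear_form Ov sc1 L1 f \<longrightarrow> (\<exists>y\<in>L2. \<forall>x\<in>L1. P x y = f x))"

text \<open>Ov-linear maps L/L' \<rightarrow> E/Ov, represented by functions f : L \<rightarrow> E (values taken mod Ov).\<close>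
definition hom_quot_to_E_mod_O ::
  "'e::field set \<Rightarrow> ('e \<Rightarrow> 'v \<Rightarrow> 'v) \<Rightarrow> 'v::ab_group_add set \<Rightarrow> 'v set \<Rightarrow> ('v \<Rightarrow> 'e) \<Rightarrow> bool" where
  "hom_quot_to_E_mod_O Ov sc L L' f \<longleftrightarrow>
     (\<forall>y\<in>L. \<forall>y'\<in>L. f (y + y') - f y - f y' \<in> Ov) \<and>
     (\<forall>a\<in>Ov. \<forall>y\<in>L. f (sc a y) - a * f y \<in> Ov) \<and> (\<forall>y\<in>L'. f y \<in> Ov)"

definition perfect_E_mod_O_pairing ::
  "'e::field set \<Rightarrow> ('e \<Rightarrow> 'v \<Rightarrow> 'v) \<Rightarrow> ('e \<Rightarrow> 'w \<Rightarrow> 'w) \<Rightarrow>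
   'v::ab_group_add set \<Rightarrow> 'v set \<Rightarrow> 'w::ab_group_add set \<Rightarrow> 'w set \<Rightarrow> ('v \<Rightarrow> 'w \<Rightarrow> 'e) \<Rightarrow> bool" where
  "perfect_E_mod_O_pairing Ov sc1 sc2 L1 L1' L2 L2' P \<longleftrightarrow>
     (\<forall>x\<in>L1'. \<forall>y\<in>L2. P x y \<in> Ov) \<and> (\<forall>x\<in>L1. \<forall>y\<in>L2'. P x y \<in> Ov) \<and>
     (\<forall>x\<in>L1. (\<forall>y\<in>L2. P x y \<in> Ov) \<longrightarrow> x \<in> L1') \<and>
     (\<forall>f. hom_quot_to_E_mod_O Ov sc2 L2 L2' f \<longrightarrow> (\<exists>x\<in>L1. \<forall>y\<in>L2. P x y - f y \<in> Ov)) \<and>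
     (\<forall>y\<in>L2. (\<forall>x\<in>L1. P x y \<in> Ov) \<longrightarrow> y \<in> L2') \<and>
     (\<forall>f. hom_quot_to_E_mod_O Ov sc1 L1 L1' f \<longrightarrow> (\<exists>y\<in>L2. \<forall>x\<in>L1. P x y - f x \<in> Ov))"

end

theory Submission
  imports Defs
begin

(* Over the discrete valuation ring Ov, the lattices e M1 and e M1 \<inter> M1 (and their analogues on the
   second side) are free, and all four have the same rank. Perfectness of [ , ] on M1 \<times> M2 together
   with the orthogonality relations identifies e M1 with the Ov-dual of e~ M2 \<inter> M2 and
   e M1 \<inter> M1 with the Ov-dual of e~ M2; this gives the perfect E/Ov-valued pairing of the
   quotients. For the Fitting ideals, let b, b' and c' be bases of e M1, e M1 \<inter> M1 and
   e~ M2 \<inter> M2, with b' = A b. Then det [b', c'] = det A * det [b, c'], and the Gram determinant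
   det [b, c'] is a unit because a basis of e M1 has a dual family in e~ M2 \<inter> M2. So
   eta(M1) = (det [b', c']), an expression symmetric in the two sides; in rank one it is
   ([delta1, delta2]) since M[ker lam] = e M \<inter> M. *)

section \<open>Discrete valuation rings\<close>

locale valuation_ring =
  fixes Ov :: "'e::field set" and v :: "'e \<Rightarrow> int" and w :: 'e
  assumes v_mult: "\<And>x y. x \<noteq> 0 \<Longrightarrow> y \<noteq> 0 \<Longrightarrow> v (x * y) = v x + v y"
    and v_add: "\<And>x y. x \<noteq> 0 \<Longrightarrow> y \<noteq> 0 \<Longrightarrow> x + y \<noteq> 0 \<Longrightarrow> min (v x) (v y) \<le> v (x + y)"
    and w_nonzero: "w \<noteq> 0" and v_w: "v w = 1"
    and Ov_eq: "Ov = {x. x = 0 \<or> 0 \<le> v x}"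
begin

lemma v_one: "v 1 = 0"
  using v_mult[of 1 1] by simp

lemma v_uminus: "v (- x) = v x"
proof (cases "x = 0")
  case False
  have "v ((-1) * (-1)) = v (-1) + v (-1)" by (rule v_mult) simp_all
  then have "v (-1) = 0" using v_one by simp
  then show ?thesis using v_mult[of "-1" x] False by simp
qed simp

lemma v_inverse: "x \<noteq> 0 \<Longrightarrow> v (inverse x) = - v x"
  using v_mult[of x "inverse x"] v_one by simp

lemma v_power_w: "v (w ^ n) = int n"
proof (induction n)
  case (Suc n)
  then show ?case using v_mult[of w "w ^ n"] w_nonzero v_w by simp
qed (simp add: v_one)

lemma Ov_zero [simp]: "0 \<in> Ov" and Ov_one [simp]: "1 \<in> Ov" and Ov_w [simp]: "w \<in> Ov"
  using v_one v_w by (auto simp: Ov_eq)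

lemma Ov_add: "x \<in> Ov \<Longrightarrow> y \<in> Ov \<Longrightarrow> x + y \<in> Ov"
  using v_add[of x y] by (cases "x = 0 \<or> y = 0 \<or> x + y = 0") (auto simp: Ov_eq)

lemma Ov_mult: "x \<in> Ov \<Longrightarrow> y \<in> Ov \<Longrightarrow> x * y \<in> Ov"
  by (cases "x = 0 \<or> y = 0") (auto simp: Ov_eq v_mult)

lemma Ov_uminus: "x \<in> Ov \<Longrightarrow> - x \<in> Ov"
  using v_uminus[of x] by (auto simp: Ov_eq)

lemma Ov_power: "x \<in> Ov \<Longrightarrow> x ^ n \<in> Ov"
  by (induction n) (auto intro: Ov_mult)

lemma Ov_sum: "(\<And>i. i \<in> A \<Longrightarrow> f i \<in> Ov) \<Longrightarrow> sum f A \<in> Ov"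
  by (induction A rule: infinite_finite_induct) (auto intro: Ov_add)

lemma Ov_prod: "(\<And>i. i \<in> A \<Longrightarrow> f i \<in> Ov) \<Longrightarrow> prod f A \<in> Ov"
  by (induction A rule: infinite_finite_induct) (auto intro: Ov_mult)

lemma Ov_of_int: "of_int k \<in> Ov"
proof -
  have "of_nat n \<in> Ov" for n
    by (induction n) (auto intro: Ov_add)
  then show ?thesis
    by (cases k rule: int_cases) (auto intro: Ov_uminus simp del: of_nat_Suc)
qed

lemma power_w_mult_in_Ov: "x \<in> Ov \<Longrightarrow> w ^ k * x \<in> Ov"
  by (intro Ov_mult Ov_power Ov_w)

lemma ex_power_w_mult_in_Ov: "\<exists>k. w ^ k * c \<in> Ov"
proof (cases "c = 0")
  case False
  let ?k = "nat (- v c)"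
  have "v (w ^ ?k * c) = int ?k + v c"
    using v_mult[of "w ^ ?k" c] False w_nonzero by (simp add: v_power_w)
  then have "w ^ ?k * c \<in> Ov" by (simp add: Ov_eq)
  then show ?thesis ..
qed simp

lemma ex_power_w_mult_in_Ov_finite:
  assumes "finite A"
  shows "\<exists>k. \<forall>i\<in>A. w ^ k * f i \<in> Ov"
  using assms
proof (induction A rule: finite_induct)
  case (insert a A)
  then obtain k where k: "\<forall>i\<in>A. w ^ k * f i \<in> Ov" by blast
  obtain j where j: "w ^ j * f a \<in> Ov" using ex_power_w_mult_in_Ov by blast
  have "w ^ (k + j) * f a \<in> Ov" "\<forall>i\<in>A. w ^ (k + j) * f i \<in> Ov"
    using power_w_mult_in_Ov[OF j, of k] power_w_mult_in_Ov[of "w ^ k * f i" j for i] k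
    by (simp_all add: power_add mult.assoc mult.left_commute)
  then show ?case by blast
qed simp

lemma divide_in_Ov:
  assumes "a \<noteq> 0" "b \<noteq> 0" "v b \<le> v a"
  shows "a / b \<in> Ov"
  using v_mult[of a "inverse b"] v_inverse[of b] assms by (simp add: divide_inverse Ov_eq)

definition Ov_unit :: "'e \<Rightarrow> bool" where
  "Ov_unit a \<longleftrightarrow> a \<in> Ov \<and> a \<noteq> 0 \<and> inverse a \<in> Ov"

lemma Ov_unitI: "a \<in> Ov \<Longrightarrow> b \<in> Ov \<Longrightarrow> a * b = 1 \<Longrightarrow> Ov_unit a"
  unfolding Ov_unit_def using inverse_unique[of a b] by auto

lemma det_in_Ov:
  assumes "A \<in> carrier_mat n n" "\<And>i j. i < n \<Longrightarrow> j < n \<Longrightarrow> A $$ (i, j) \<in> Ov"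
  shows "det A \<in> Ov"
  unfolding det_def'[OF assms(1)]
proof (intro Ov_sum Ov_mult Ov_prod)
  fix p i assume "p \<in> {p. p permutes {0..<n}}" "i \<in> {0..<n}"
  then show "A $$ (i, p i) \<in> Ov" using assms(2) permutes_in_image by fastforce
qed (rule Ov_of_int)

end

section \<open>Lattices over a discrete valuation ring\<close>

lemma sum_lessThan_Suc_fun_upd: "(\<Sum>i<Suc r. f i ((d(r := x)) i)) = (\<Sum>i<r. f i (d i)) + f r x"
  by (auto intro!: sum.cong)

locale lattice_space = valuation_ring Ov v w + vector_space scale
  for Ov :: "'e::field set" and v w and scale :: "'e \<Rightarrow> 'v::ab_group_add \<Rightarrow> 'v"
begin

definition indep_family :: "nat \<Rightarrow> (nat \<Rightarrow> 'v) \<Rightarrow> bool" where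
  "indep_family n b \<longleftrightarrow> (\<forall>c. (\<Sum>i<n. scale (c i) (b i)) = 0 \<longrightarrow> (\<forall>i<n. c i = 0))"

definition E_span :: "nat \<Rightarrow> (nat \<Rightarrow> 'v) \<Rightarrow> 'v set" where
  "E_span n b = {(\<Sum>i<n. scale (c i) (b i)) | c. True}"

definition O_span :: "nat \<Rightarrow> (nat \<Rightarrow> 'v) \<Rightarrow> 'v set" where
  "O_span n b = {(\<Sum>i<n. scale (c i) (b i)) | c. \<forall>i<n. c i \<in> Ov}"

text \<open>coord n b i x is only meaningful for x in E_span n b and b independent; otherwise THE is
  applied to a predicate without a unique witness.\<close>

definition coord :: "nat \<Rightarrow> (nat \<Rightarrow> 'v) \<Rightarrow> nat \<Rightarrow> 'v \<Rightarrow> 'e" where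
  "coord n b i x = (THE a. \<exists>c. x = (\<Sum>j<n. scale (c j) (b j)) \<and> c i = a)"

definition O_submodule :: "'v set \<Rightarrow> bool" where
  "O_submodule L \<longleftrightarrow> 0 \<in> L \<and> (\<forall>x\<in>L. \<forall>y\<in>L. x + y \<in> L) \<and> (\<forall>a\<in>Ov. \<forall>x\<in>L. scale a x \<in> L)"

lemma E_spanI: "x = (\<Sum>i<n. scale (c i) (b i)) \<Longrightarrow> x \<in> E_span n b"
  unfolding E_span_def by blast

lemma O_spanI: "x = (\<Sum>i<n. scale (c i) (b i)) \<Longrightarrow> (\<And>i. i < n \<Longrightarrow> c i \<in> Ov) \<Longrightarrow> x \<in> O_span n b"
  unfolding O_span_def by blast

lemma indep_familyD: "indep_family n b \<Longrightarrow> (\<Sum>i<n. scale (c i) (b i)) = 0 \<Longrightarrow> i < n \<Longrightarrow> c i = 0"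
  unfolding indep_family_def by blast

lemma indep_family_unique:
  assumes "indep_family n b" "(\<Sum>i<n. scale (c i) (b i)) = (\<Sum>i<n. scale (c' i) (b i))" "i < n"
  shows "c i = c' i"
proof -
  have "(\<Sum>i<n. scale (c i - c' i) (b i)) = 0"
    using assms(2) by (simp add: sum_subtractf scale_left_diff_distrib)
  then show ?thesis using indep_familyD[OF assms(1) _ assms(3), where c="\<lambda>i. c i - c' i"] by simp
qed

lemma coord_eq:
  assumes "indep_family n b" "i < n"
  shows "coord n b i (\<Sum>j<n. scale (c j) (b j)) = c i"
  unfolding coord_def
  by (rule the_equality) (use indep_family_unique[OF assms(1) _ assms(2)] in metis)+

lemma E_span_repr:
  assumes "indep_family n b" "x \<in> E_span n b"
  shows "x = (\<Sum>j<n. scale (coord n b j x) (b j))"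
proof -
  obtain c where x: "x = (\<Sum>j<n. scale (c j) (b j))" using assms(2) unfolding E_span_def by blast
  show ?thesis unfolding x by (rule sum.cong) (use coord_eq[OF assms(1)] in auto)
qed

lemma O_span_subset_E_span: "O_span n b \<subseteq> E_span n b"
  unfolding O_span_def E_span_def by blast

lemma E_span_add: "x \<in> E_span n b \<Longrightarrow> y \<in> E_span n b \<Longrightarrow> x + y \<in> E_span n b"
  unfolding E_span_def
  by clarify (rule exI[where x="\<lambda>i. _ i + _ i"], simp add: sum.distrib scale_left_distrib)

lemma E_span_scale: "x \<in> E_span n b \<Longrightarrow> scale a x \<in> E_span n b"
  unfolding E_span_def by clarify (rule exI[where x="\<lambda>i. a * _ i"], simp add: scale_sum_right)

lemma E_span_sum:
  "(\<And>j. j \<in> A \<Longrightarrow> x j \<in> E_span n b) \<Longrightarrow> (\<Sum>j\<in>A. scale (a j) (x j)) \<in> E_span n b"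
proof (induction A rule: infinite_finite_induct)
  case (insert j A)
  then show ?case by (auto intro: E_span_add E_span_scale)
qed (use E_spanI[where c="\<lambda>_. 0"] in simp_all)

lemma O_span_zero: "0 \<in> O_span n b"
  by (rule O_spanI[where c="\<lambda>_. 0"]) simp_all

lemma O_span_add: "x \<in> O_span n b \<Longrightarrow> y \<in> O_span n b \<Longrightarrow> x + y \<in> O_span n b"
proof -
  assume "x \<in> O_span n b" "y \<in> O_span n b"
  then obtain c c' where "x = (\<Sum>i<n. scale (c i) (b i))" "y = (\<Sum>i<n. scale (c' i) (b i))"
    "\<forall>i<n. c i \<in> Ov" "\<forall>i<n. c' i \<in> Ov"
    unfolding O_span_def by blast
  then show ?thesis
    by (intro O_spanI[where c="\<lambda>i. c i + c' i"]) (simp_all add: sum.distrib scale_left_distrib Ov_add)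
qed

lemma O_span_scale: "a \<in> Ov \<Longrightarrow> x \<in> O_span n b \<Longrightarrow> scale a x \<in> O_span n b"
proof -
  assume "a \<in> Ov" "x \<in> O_span n b"
  then obtain c where "x = (\<Sum>i<n. scale (c i) (b i))" "\<forall>i<n. c i \<in> Ov"
    unfolding O_span_def by blast
  then show ?thesis
    by (intro O_spanI[where c="\<lambda>i. a * c i"]) (simp_all add: scale_sum_right Ov_mult \<open>a \<in> Ov\<close>)
qed

lemma O_submodule_O_span: "O_submodule (O_span n b)"
  unfolding O_submodule_def using O_span_zero O_span_add O_span_scale by blast

lemma coord_add:
  assumes "indep_family n b" "i < n" "x \<in> E_span n b" "y \<in> E_span n b"
  shows "coord n b i (x + y) = coord n b i x + coord n b i y"
proof -
  obtain c c' where "x = (\<Sum>i<n. scale (c i) (b i))" "y = (\<Sum>i<n. scale (c' i) (b i))"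
    using assms(3,4) unfolding E_span_def by blast
  then show ?thesis
    using coord_eq[OF assms(1,2), of "\<lambda>i. c i + c' i"] coord_eq[OF assms(1,2)]
    by (simp add: sum.distrib scale_left_distrib)
qed

lemma coord_scale:
  assumes "indep_family n b" "i < n" "x \<in> E_span n b"
  shows "coord n b i (scale a x) = a * coord n b i x"
proof -
  obtain c where "x = (\<Sum>i<n. scale (c i) (b i))"
    using assms(3) unfolding E_span_def by blast
  then show ?thesis
    using coord_eq[OF assms(1,2), of "\<lambda>i. a * c i"] coord_eq[OF assms(1,2)]
    by (simp add: scale_sum_right)
qed

lemma coord_in_Ov:
  assumes "indep_family n b" "i < n" "x \<in> O_span n b"
  shows "coord n b i x \<in> Ov"
  using assms coord_eq[OF assms(1,2)] unfolding O_span_def by auto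

lemma O_span_iff:
  assumes "indep_family n b"
  shows "x \<in> O_span n b \<longleftrightarrow> x \<in> E_span n b \<and> (\<forall>i<n. coord n b i x \<in> Ov)"
proof
  assume "x \<in> E_span n b \<and> (\<forall>i<n. coord n b i x \<in> Ov)"
  then show "x \<in> O_span n b" using E_span_repr[OF assms] by (intro O_spanI) auto
qed (use O_span_subset_E_span coord_in_Ov[OF assms] in blast)

lemma family_in_O_span:
  assumes "i < n"
  shows "b i \<in> O_span n b"
proof (rule O_spanI)
  show "b i = (\<Sum>j<n. scale (if j = i then 1 else 0) (b j))"
    using assms by (simp add: if_distrib[of "\<lambda>c. scale c _"] cong: if_cong)
qed simp

lemma coord_family:
  assumes "indep_family n b" "i < n" "k < n"
  shows "coord n b k (b i) = (if k = i then 1 else 0)"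
proof -
  have "b i = (\<Sum>j<n. scale (if j = i then 1 else 0) (b j))"
    using assms by (simp add: if_distrib[of "\<lambda>c. scale c _"] cong: if_cong)
  then show ?thesis using coord_eq[OF assms(1,3), of "\<lambda>j. if j = i then 1 else 0"] by simp
qed

lemma coord_sum:
  assumes "indep_family n b" "i < n" "\<And>j. j \<in> A \<Longrightarrow> x j \<in> E_span n b"
  shows "coord n b i (\<Sum>j\<in>A. scale (a j) (x j)) = (\<Sum>j\<in>A. a j * coord n b i (x j))"
  using assms(3)
proof (induction A rule: infinite_finite_induct)
  case (insert j A)
  then show ?case
    by (simp add: coord_add[OF assms(1,2)] coord_scale[OF assms(1,2)] E_span_scale E_span_sum)
qed (use coord_eq[OF assms(1,2), of "\<lambda>_. 0"] in simp_all)

lemma indep_family_iff: "indep_family n b \<longleftrightarrow> inj_on b {..<n} \<and> independent (b ` {..<n})"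
proof
  assume ind: "indep_family n b"
  have inj: "inj_on b {..<n}"
  proof (rule inj_onI)
    fix i j assume "i \<in> {..<n}" "j \<in> {..<n}" "b i = b j"
    then show "i = j" using coord_family[OF ind, of i i] coord_family[OF ind, of j i]
      by (auto split: if_splits)
  qed
  moreover have "independent (b ` {..<n})"
  proof
    assume "dependent (b ` {..<n})"
    then obtain u where u: "\<exists>x\<in>b ` {..<n}. u x \<noteq> 0" "(\<Sum>x\<in>b ` {..<n}. scale (u x) x) = 0"
      using dependent_finite[of "b ` {..<n}"] by auto
    have "(\<Sum>i<n. scale (u (b i)) (b i)) = 0"
      using u(2) sum.reindex[OF inj, of "\<lambda>x. scale (u x) x"] by simp
    then show False using u(1) indep_familyD[OF ind, where c="\<lambda>i. u (b i)"] by blast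
  qed
  ultimately show "inj_on b {..<n} \<and> independent (b ` {..<n})" by blast
next
  assume a: "inj_on b {..<n} \<and> independent (b ` {..<n})"
  let ?i = "the_inv_into {..<n} b"
  have inv: "?i (b i) = i" if "i < n" for i
    using a that the_inv_into_f_f by (metis lessThan_iff)
  show "indep_family n b" unfolding indep_family_def
  proof (intro allI impI)
    fix c i assume c: "(\<Sum>i<n. scale (c i) (b i)) = 0" and i: "i < n"
    have "(\<Sum>x\<in>b ` {..<n}. scale (c (?i x)) x) = (\<Sum>i<n. scale (c i) (b i))"
      using a inv by (simp add: sum.reindex)
    then have "\<forall>x\<in>b ` {..<n}. c (?i x) = 0"
      using a c independentD[of "b ` {..<n}" "b ` {..<n}" "\<lambda>x. c (?i x)"] by simp
    then show "c i = 0" using inv[OF i] i by force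
  qed
qed

lemma O_basis_iff: "O_basis Ov scale r b L \<longleftrightarrow> indep_family r b \<and> L = O_span r b"
  unfolding O_basis_def indep_family_iff O_span_def by (simp only: conj_assoc)

lemma E_span_subset_span: "E_span n b \<subseteq> span (b ` {..<n})"
  unfolding E_span_def by (auto intro!: span_sum span_scale intro: span_base)

lemma span_subset_E_span:
  assumes "inj_on b {..<n}"
  shows "span (b ` {..<n}) \<subseteq> E_span n b"
proof
  fix x assume "x \<in> span (b ` {..<n})"
  then obtain u where "(\<Sum>y\<in>b ` {..<n}. scale (u y) y) = x"
    using span_finite[of "b ` {..<n}"] by auto
  then have "x = (\<Sum>i<n. scale (u (b i)) (b i))"
    using sum.reindex[OF assms, of "\<lambda>y. scale (u y) y"] by simp
  then show "x \<in> E_span n b" by (rule E_spanI)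
qed

lemma indep_family_le:
  assumes "indep_family r y" "\<And>i. i < r \<Longrightarrow> y i \<in> E_span s c"
  shows "r \<le> s"
proof -
  have inj: "inj_on y {..<r}" and ind: "independent (y ` {..<r})"
    using assms(1) indep_family_iff by auto
  have "y ` {..<r} \<subseteq> span (c ` {..<s})" using assms(2) E_span_subset_span by blast
  then have "card (y ` {..<r}) \<le> card (c ` {..<s})"
    using independent_span_bound[of "c ` {..<s}" "y ` {..<r}"] ind by simp
  also have "\<dots> \<le> s" using card_image_le[of "{..<s}" c] by simp
  finally show ?thesis using card_image[OF inj] by simp
qed

lemma indep_family_Suc_D: "indep_family (Suc n) b \<Longrightarrow> indep_family n b"
  unfolding indep_family_def
proof (intro allI impI)
  fix c i assume ind: "\<forall>c. (\<Sum>i<Suc n. scale (c i) (b i)) = 0 \<longrightarrow> (\<forall>i<Suc n. c i = 0)"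
    and c: "(\<Sum>i<n. scale (c i) (b i)) = 0" and i: "i < n"
  have "(\<Sum>j<Suc n. scale ((c(n := 0)) j) (b j)) = 0"
    using c sum_lessThan_Suc_fun_upd[where f="\<lambda>j a. scale a (b j)" and r=n and d=c and x=0] by simp
  then have "(c(n := 0)) i = 0" using ind i less_SucI by blast
  then show "c i = 0" using i by simp
qed

lemma coord_fun_upd_comb:
  assumes b: "indep_family n b" "i < n"
    and d: "\<forall>j<r. d j \<in> E_span n b \<and> coord n b i (d j) = 0" and x0: "x0 \<in> E_span n b"
  shows "coord n b i ((\<Sum>j<r. scale (c j) (d j)) + scale a x0) = a * coord n b i x0"
proof -
  have "coord n b i ((\<Sum>j<r. scale (c j) (d j)) + scale a x0)
      = coord n b i (\<Sum>j<r. scale (c j) (d j)) + coord n b i (scale a x0)"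
    using d x0 by (intro coord_add[OF b] E_span_sum E_span_scale) auto
  also have "coord n b i (\<Sum>j<r. scale (c j) (d j)) = (\<Sum>j<r. c j * coord n b i (d j))"
    by (rule coord_sum[OF b]) (use d in auto)
  also have "\<dots> + coord n b i (scale a x0) = a * coord n b i x0"
    using d x0 by (simp add: coord_scale[OF b])
  finally show ?thesis .
qed

lemma indep_family_fun_upd:
  assumes b: "indep_family n b" "i < n" and d: "indep_family r d"
    and d_ker: "\<forall>j<r. d j \<in> E_span n b \<and> coord n b i (d j) = 0"
    and x0: "x0 \<in> E_span n b" "coord n b i x0 \<noteq> 0"
  shows "indep_family (Suc r) (d(r := x0))"
  unfolding indep_family_def
proof (intro allI impI)
  fix c j assume "(\<Sum>j<Suc r. scale (c j) ((d(r := x0)) j)) = 0" and j: "j < Suc r"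
  then have c: "(\<Sum>j<r. scale (c j) (d j)) + scale (c r) x0 = 0"
    by (simp add: sum_lessThan_Suc_fun_upd[of "\<lambda>j a. scale (c j) a"])
  then have "c r * coord n b i x0 = 0"
    using coord_fun_upd_comb[OF b d_ker x0(1), of c "c r"] coord_eq[OF b, of "\<lambda>_. 0"] by simp
  then have "c r = 0" using x0(2) by simp
  moreover from this have "\<forall>j<r. c j = 0" using c indep_familyD[OF d] by auto
  ultimately show "c j = 0" using j less_Suc_eq by auto
qed

text \<open>The hypothesis minimal says that x0 minimises the valuation of the i-th coordinate on L.\<close>

lemma O_basis_fun_upd:
  assumes b: "indep_family n b" "i < n" and L: "O_submodule L" "L \<subseteq> E_span n b"
    and d: "O_basis Ov scale r d {x\<in>L. coord n b i x = 0}"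
    and x0: "x0 \<in> L" "coord n b i x0 \<noteq> 0"
    and minimal: "\<forall>x\<in>L. coord n b i x / coord n b i x0 \<in> Ov"
  shows "O_basis Ov scale (Suc r) (d(r := x0)) L"
proof -
  let ?\<kappa> = "coord n b i"
  have d_ind: "indep_family r d" and L0: "{x\<in>L. ?\<kappa> x = 0} = O_span r d"
    using d O_basis_iff by auto
  have dL: "\<forall>j<r. d j \<in> L \<and> ?\<kappa> (d j) = 0"
    using family_in_O_span[of _ r d] L0 by auto
  have comb: "(\<Sum>j<Suc r. scale (c j) ((d(r := x0)) j)) = (\<Sum>j<r. scale (c j) (d j)) + scale (c r) x0"
    for c using sum_lessThan_Suc_fun_upd[of "\<lambda>j a. scale (c j) a"] .
  have "L \<subseteq> O_span (Suc r) (d(r := x0))"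
  proof
    fix x assume x: "x \<in> L"
    define q where "q = ?\<kappa> x / ?\<kappa> x0"
    have q: "q \<in> Ov" "- q \<in> Ov" using minimal x Ov_uminus unfolding q_def by auto
    have "x + scale (- q) x0 \<in> L" using L(1) x x0(1) q(2) unfolding O_submodule_def by blast
    moreover have "?\<kappa> (x + scale (- q) x0) = 0"
    proof -
      have "x \<in> E_span n b" "x0 \<in> E_span n b" using x x0(1) L(2) by auto
      then have "?\<kappa> (x + scale (- q) x0) = ?\<kappa> x + (- q) * ?\<kappa> x0"
        by (simp only: coord_add[OF b] coord_scale[OF b] E_span_scale)
      then show ?thesis using x0(2) by (simp add: q_def)
    qed
    ultimately obtain c where c: "x + scale (- q) x0 = (\<Sum>j<r. scale (c j) (d j))" "\<forall>j<r. c j \<in> Ov"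
      using L0 unfolding O_span_def by blast
    have "(\<Sum>j<Suc r. scale ((c(r := q)) j) ((d(r := x0)) j)) = (\<Sum>j<r. scale (c j) (d j)) + scale q x0"
      unfolding comb by (auto intro!: sum.cong)
    also have "\<dots> = x" using c(1) by (simp add: eq_diff_eq[symmetric])
    finally have "x = (\<Sum>j<Suc r. scale ((c(r := q)) j) ((d(r := x0)) j))" ..
    then show "x \<in> O_span (Suc r) (d(r := x0))"
      by (rule O_spanI) (use c(2) q(1) less_Suc_eq in auto)
  qed
  moreover have "O_span (Suc r) (d(r := x0)) \<subseteq> L"
  proof
    fix y assume "y \<in> O_span (Suc r) (d(r := x0))"
    then obtain c where c: "y = (\<Sum>j<r. scale (c j) (d j)) + scale (c r) x0" "\<forall>j<Suc r. c j \<in> Ov"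
      unfolding O_span_def comb by blast
    have "(\<Sum>j<r. scale (c j) (d j)) \<in> O_span r d" using c(2) by (intro O_spanI) auto
    then have "(\<Sum>j<r. scale (c j) (d j)) \<in> L" using L0 by blast
    then show "y \<in> L" using L(1) c x0(1) unfolding O_submodule_def by simp
  qed
  moreover have "indep_family (Suc r) (d(r := x0))"
    using dL L(2) x0 by (intro indep_family_fun_upd[OF b d_ind]) auto
  ultimately show ?thesis using O_basis_iff by blast
qed

lemma O_submodule_has_O_basis:
  assumes "indep_family n b" "L \<subseteq> O_span n b" "O_submodule L"
  shows "\<exists>r d. O_basis Ov scale r d L"
  using assms
proof (induction n arbitrary: L)
  case 0
  then have "L = O_span 0 b" using O_span_zero unfolding O_span_def O_submodule_def by auto
  then show ?case using "0.prems"(1) O_basis_iff by blast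
next
  case (Suc n)
  let ?\<kappa> = "coord (Suc n) b n"
  have b: "indep_family (Suc n) b" "n < Suc n" using Suc.prems(1) by simp_all
  have LE: "L \<subseteq> E_span (Suc n) b" using Suc.prems(2) O_span_subset_E_span by blast
  define L0 where "L0 = {x\<in>L. ?\<kappa> x = 0}"
  have "L0 \<subseteq> O_span n b"
  proof
    fix x assume "x \<in> L0"
    then obtain c where c: "x = (\<Sum>i<Suc n. scale (c i) (b i))" "\<forall>i<Suc n. c i \<in> Ov" "?\<kappa> x = 0"
      using Suc.prems(2) unfolding L0_def O_span_def by blast
    then have "x = (\<Sum>i<n. scale (c i) (b i))" using coord_eq[OF b] by simp
    then show "x \<in> O_span n b" by (rule O_spanI) (use c(2) in auto)
  qed
  moreover have "O_submodule L0"
    using Suc.prems(3) LE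
    by (auto simp: O_submodule_def L0_def coord_add[OF b] coord_scale[OF b] coord_eq[OF b, of "\<lambda>_. 0", simplified] subsetD)
  ultimately obtain r d where d: "O_basis Ov scale r d L0"
    using Suc.IH indep_family_Suc_D[OF Suc.prems(1)] by blast
  show ?case
  proof (cases "\<exists>x\<in>L. ?\<kappa> x \<noteq> 0")
    case False
    then have "L = L0" unfolding L0_def by auto
    then show ?thesis using d by blast
  next
    case True
    then obtain x0 where x0: "x0 \<in> L" "?\<kappa> x0 \<noteq> 0"
      and least: "\<And>x. x \<in> L \<Longrightarrow> ?\<kappa> x \<noteq> 0 \<Longrightarrow> nat (v (?\<kappa> x0)) \<le> nat (v (?\<kappa> x))"
      using ex_has_least_nat[of "\<lambda>x. x \<in> L \<and> ?\<kappa> x \<noteq> 0" _ "\<lambda>x. nat (v (?\<kappa> x))"] by blast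
    have v_nonneg: "0 \<le> v (?\<kappa> x)" if "x \<in> L" "?\<kappa> x \<noteq> 0" for x
      using coord_in_Ov[OF b] Suc.prems(2) that unfolding Ov_eq by blast
    have "?\<kappa> x / ?\<kappa> x0 \<in> Ov" if x: "x \<in> L" for x
    proof (cases "?\<kappa> x = 0")
      case False
      then have "v (?\<kappa> x0) \<le> v (?\<kappa> x)" using least[OF x] v_nonneg x x0 by fastforce
      then show ?thesis using divide_in_Ov False x0 by blast
    qed simp
    then have "O_basis Ov scale (Suc r) (d(r := x0)) L"
      using O_basis_fun_upd[OF b Suc.prems(3) LE _ x0] d unfolding L0_def by blast
    then show ?thesis by blast
  qed
qed

lemma full_O_lattice_O_basis:
  assumes "full_O_lattice Ov scale L"
  obtains n b where "O_basis Ov scale n b L" "E_span n b = UNIV"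
proof -
  obtain n b where b: "O_basis Ov scale n b L" "span (b ` {..<n}) = UNIV"
    using assms unfolding full_O_lattice_def by blast
  then have "E_span n b = UNIV" using span_subset_E_span[of b n] unfolding O_basis_def by blast
  then show ?thesis using that b(1) by blast
qed

lemma full_O_lattice_O_submodule: "full_O_lattice Ov scale L \<Longrightarrow> O_submodule L"
  by (metis full_O_lattice_O_basis O_basis_iff O_submodule_O_span)

lemma full_O_lattice_ex_scale_in:
  assumes "full_O_lattice Ov scale L"
  shows "\<exists>k. scale (w ^ k) x \<in> L"
proof -
  obtain n b where b: "O_basis Ov scale n b L" "E_span n b = UNIV"
    using full_O_lattice_O_basis[OF assms] .
  obtain c where x: "x = (\<Sum>i<n. scale (c i) (b i))" using b(2) unfolding E_span_def by blast
  obtain k where k: "\<forall>i\<in>{..<n}. w ^ k * c i \<in> Ov"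
    using ex_power_w_mult_in_Ov_finite[of "{..<n}" c] by blast
  have "scale (w ^ k) x = (\<Sum>i<n. scale (w ^ k * c i) (b i))"
    unfolding x by (simp add: scale_sum_right)
  also have "\<dots> \<in> L" using b(1) k unfolding O_basis_iff by (auto intro: O_spanI)
  finally show ?thesis ..
qed

lemma O_submodule_sum:
  assumes "O_submodule L" "\<And>i. i \<in> A \<Longrightarrow> a i \<in> Ov" "\<And>i. i \<in> A \<Longrightarrow> x i \<in> L"
  shows "(\<Sum>i\<in>A. scale (a i) (x i)) \<in> L"
  using assms(2,3) by (induction A rule: infinite_finite_induct)
    (use assms(1) in \<open>auto simp: O_submodule_def\<close>)

lemma hom_quot_to_E_mod_O_sum:
  assumes f: "hom_quot_to_E_mod_O Ov scale L L' f" and L: "O_submodule L"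
    and "\<And>i. i \<in> A \<Longrightarrow> a i \<in> Ov" "\<And>i. i \<in> A \<Longrightarrow> x i \<in> L"
  shows "f (\<Sum>i\<in>A. scale (a i) (x i)) - (\<Sum>i\<in>A. a i * f (x i)) \<in> Ov"
proof -
  have "f (0 + 0) - f 0 - f 0 \<in> Ov" using f L unfolding hom_quot_to_E_mod_O_def O_submodule_def by blast
  then have f0: "f 0 \<in> Ov" using Ov_uminus by fastforce
  show ?thesis
    using assms(3,4)
  proof (induction A rule: infinite_finite_induct)
    case (insert j A)
    let ?S = "\<Sum>i\<in>A. scale (a i) (x i)"
    have "scale (a j) (x j) \<in> L" "?S \<in> L"
      using insert.prems L O_submodule_sum[OF L, of A a x] unfolding O_submodule_def by auto
    then have "f (scale (a j) (x j) + ?S) - f (scale (a j) (x j)) - f ?S \<in> Ov"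
      "f (scale (a j) (x j)) - a j * f (x j) \<in> Ov"
      using f insert.prems unfolding hom_quot_to_E_mod_O_def by auto
    moreover have "f ?S - (\<Sum>i\<in>A. a i * f (x i)) \<in> Ov" using insert by simp
    ultimately have "(f (scale (a j) (x j) + ?S) - f (scale (a j) (x j)) - f ?S)
        + (f (scale (a j) (x j)) - a j * f (x j)) + (f ?S - (\<Sum>i\<in>A. a i * f (x i))) \<in> Ov"
      by (intro Ov_add)
    then show ?case using insert.hyps by (simp add: algebra_simps)
  qed (use f0 in simp_all)
qed

end

section \<open>Pairings compatible with idempotent projections\<close>

text \<open>E1 and E2 stand for the actions of e and e~. In lemma names E1M1 refers to E1 ` M1 (the
  lattice e M1) and N1 to E1 ` M1 \<inter> M1; likewise E2M2 and N2.\<close>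

locale projected_pairing = V1: lattice_space Ov v w sc1 + V2: lattice_space Ov v w sc2
  for Ov :: "'e::field set" and v w
    and sc1 :: "'e \<Rightarrow> 'v::ab_group_add \<Rightarrow> 'v" and sc2 :: "'e \<Rightarrow> 'w::ab_group_add \<Rightarrow> 'w" +
  fixes M1 :: "'v set" and M2 :: "'w set" and P :: "'v \<Rightarrow> 'w \<Rightarrow> 'e"
    and E1 :: "'v \<Rightarrow> 'v" and E2 :: "'w \<Rightarrow> 'w"
  assumes M1: "full_O_lattice Ov sc1 M1" and M2: "full_O_lattice Ov sc2 M2"
    and E1_add: "\<And>x y. E1 (x + y) = E1 x + E1 y" and E1_scale: "\<And>c x. E1 (sc1 c x) = sc1 c (E1 x)"
    and E1_idem: "\<And>x. E1 (E1 x) = E1 x" and E1_bounded: "\<exists>k. \<forall>m\<in>M1. sc1 (w ^ k) (E1 m) \<in> M1"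
    and E2_add: "\<And>x y. E2 (x + y) = E2 x + E2 y" and E2_scale: "\<And>c x. E2 (sc2 c x) = sc2 c (E2 x)"
    and E2_idem: "\<And>x. E2 (E2 x) = E2 x" and E2_bounded: "\<exists>k. \<forall>m\<in>M2. sc2 (w ^ k) (E2 m) \<in> M2"
    and P_bilinear: "E_bilinear sc1 sc2 P"
    and P_perfect: "perfect_O_pairing Ov sc1 sc2 M1 M2 P"
    and orth1: "\<forall>x\<in>M1. \<forall>y\<in>M2. P (E1 x) (y - E2 y) = 0"
    and orth2: "\<forall>x\<in>M1. \<forall>y\<in>M2. P (x - E1 x) (E2 y) = 0"
begin

lemma swapped: "projected_pairing Ov v w sc2 sc1 M2 M1 (\<lambda>y x. P x y) E2 E1"
proof -
  have "E_bilinear sc2 sc1 (\<lambda>y x. P x y)" using P_bilinear unfolding E_bilinear_def by auto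
  moreover have "perfect_O_pairing Ov sc2 sc1 M2 M1 (\<lambda>y x. P x y)"
    using P_perfect unfolding perfect_O_pairing_def by auto
  ultimately show ?thesis
    by unfold_locales (use M1 M2 E1_add E1_scale E1_idem E1_bounded E2_add E2_scale E2_idem E2_bounded
        orth1 orth2 in auto)
qed

lemma P_add_left: "P (x + x') y = P x y + P x' y"
  and P_add_right: "P x (y + y') = P x y + P x y'"
  and P_scale_left: "P (sc1 c x) y = c * P x y"
  and P_scale_right: "P x (sc2 c y) = c * P x y"
  using P_bilinear unfolding E_bilinear_def by blast+

lemma P_zero_left: "P 0 y = 0" and P_zero_right: "P x 0 = 0"
  using P_scale_left[of 0 0 y] P_scale_right[of x 0 0] by simp_all

lemma P_diff_left: "P (x - x') y = P x y - P x' y"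
  using P_add_left[of "x - x'" x' y] by (simp add: eq_diff_eq)

lemma P_diff_right: "P x (y - y') = P x y - P x y'"
  using P_add_right[of x "y - y'" y'] by (simp add: eq_diff_eq)

lemma P_sum_left: "P (\<Sum>k\<in>A. sc1 (a k) (x k)) y = (\<Sum>k\<in>A. a k * P (x k) y)"
  by (induction A rule: infinite_finite_induct) (simp_all add: P_zero_left P_add_left P_scale_left)

lemma P_sum_right: "P x (\<Sum>k\<in>A. sc2 (a k) (y k)) = (\<Sum>k\<in>A. a k * P x (y k))"
  by (induction A rule: infinite_finite_induct) (simp_all add: P_zero_right P_add_right P_scale_right)

lemma P_in_Ov: "x \<in> M1 \<Longrightarrow> y \<in> M2 \<Longrightarrow> P x y \<in> Ov"
  using P_perfect unfolding perfect_O_pairing_def by blast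

lemma E1_zero: "E1 0 = 0"
  using E1_scale[of 0 0] by simp

lemma E1_sum: "E1 (\<Sum>k\<in>A. sc1 (a k) (x k)) = (\<Sum>k\<in>A. sc1 (a k) (E1 (x k)))"
  by (induction A rule: infinite_finite_induct) (simp_all add: E1_zero E1_add E1_scale)

lemma M1_O_submodule: "V1.O_submodule M1"
  by (rule V1.full_O_lattice_O_submodule[OF M1])

lemma N1_iff: "x \<in> E1 ` M1 \<inter> M1 \<longleftrightarrow> x \<in> M1 \<and> E1 x = x"
  using E1_idem by force

lemma ex_scale_in_M1: "\<exists>k. sc1 (w ^ k) x \<in> M1"
  by (rule V1.full_O_lattice_ex_scale_in[OF M1])

lemma ex_scale_in_M2: "\<exists>k. sc2 (w ^ k) y \<in> M2"
  by (rule V2.full_O_lattice_ex_scale_in[OF M2])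

text \<open>The orthogonality relations, assumed only on the lattices, extend to the whole spaces by
  clearing denominators.\<close>

lemma P_E1_left: "P (E1 x) y = P (E1 x) (E2 y)"
proof -
  obtain k j where kj: "sc1 (w ^ k) x \<in> M1" "sc2 (w ^ j) y \<in> M2" using ex_scale_in_M1 ex_scale_in_M2 by blast
  have "w ^ k * (w ^ j * P (E1 x) (y - E2 y)) = P (E1 (sc1 (w ^ k) x)) (sc2 (w ^ j) y - E2 (sc2 (w ^ j) y))"
    by (simp add: E1_scale E2_scale P_scale_left P_scale_right flip: V2.scale_right_diff_distrib)
  also have "\<dots> = 0" using orth1 kj by blast
  finally show ?thesis using V1.w_nonzero by (simp add: P_diff_right)
qed

lemma P_E2_right: "P x (E2 y) = P (E1 x) (E2 y)"
proof -
  obtain k j where kj: "sc1 (w ^ k) x \<in> M1" "sc2 (w ^ j) y \<in> M2" using ex_scale_in_M1 ex_scale_in_M2 by blast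
  have "w ^ k * (w ^ j * P (x - E1 x) (E2 y)) = P (sc1 (w ^ k) x - E1 (sc1 (w ^ k) x)) (E2 (sc2 (w ^ j) y))"
    by (simp add: E1_scale E2_scale P_scale_left P_scale_right flip: V1.scale_right_diff_distrib)
  also have "\<dots> = 0" using orth2 kj by blast
  finally show ?thesis using V1.w_nonzero by (simp add: P_diff_left)
qed

lemma P_nondegenerate_left: "(\<And>y. y \<in> M2 \<Longrightarrow> P x y = 0) \<Longrightarrow> x = 0"
proof -
  assume x: "\<And>y. y \<in> M2 \<Longrightarrow> P x y = 0"
  obtain k where k: "sc1 (w ^ k) x \<in> M1" using ex_scale_in_M1 by blast
  have "\<forall>y\<in>M2. P (sc1 (w ^ k) x) y = P 0 y" using x by (simp add: P_scale_left P_zero_left)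
  then have "sc1 (w ^ k) x = 0"
    using P_perfect k V1.O_submodule_def M1_O_submodule unfolding perfect_O_pairing_def by blast
  then show "x = 0" using V1.w_nonzero by simp
qed

lemma in_M1_if_integral_on_M2: "(\<And>y. y \<in> M2 \<Longrightarrow> P x y \<in> Ov) \<Longrightarrow> x \<in> M1"
proof -
  assume "\<And>y. y \<in> M2 \<Longrightarrow> P x y \<in> Ov"
  then have "O_linear_form Ov sc2 M2 (P x)"
    unfolding O_linear_form_def by (simp add: P_add_right P_scale_right)
  then obtain x' where x': "x' \<in> M1" "\<forall>y\<in>M2. P x' y = P x y"
    using P_perfect unfolding perfect_O_pairing_def by blast
  have "x - x' = 0" by (rule P_nondegenerate_left) (use x' in \<open>simp add: P_diff_left\<close>)
  then show "x \<in> M1" using x' by simp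
qed

lemma E1M1_O_submodule: "V1.O_submodule (E1 ` M1)"
  unfolding V1.O_submodule_def
proof (intro conjI ballI)
  show "0 \<in> E1 ` M1" using M1_O_submodule E1_zero unfolding V1.O_submodule_def by force
next
  fix x y assume "x \<in> E1 ` M1" "y \<in> E1 ` M1"
  then show "x + y \<in> E1 ` M1"
    using M1_O_submodule unfolding V1.O_submodule_def by (auto simp: E1_add[symmetric])
next
  fix a x assume "a \<in> Ov" "x \<in> E1 ` M1"
  then show "sc1 a x \<in> E1 ` M1"
    using M1_O_submodule unfolding V1.O_submodule_def by (auto simp: E1_scale[symmetric])
qed

lemma N1_O_submodule: "V1.O_submodule (E1 ` M1 \<inter> M1)"
  using M1_O_submodule unfolding V1.O_submodule_def Ball_def N1_iff by (simp add: E1_zero E1_add E1_scale)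

lemma E1M1_O_basis: "\<exists>r b. O_basis Ov sc1 r b (E1 ` M1)"
proof -
  obtain n m where m: "O_basis Ov sc1 n m M1" using V1.full_O_lattice_O_basis[OF M1] by blast
  obtain k where k: "\<forall>x\<in>M1. sc1 (w ^ k) (E1 x) \<in> M1" using E1_bounded by blast
  define b where "b i = sc1 (inverse (w ^ k)) (m i)" for i
  have "V1.indep_family n b"
    unfolding V1.indep_family_def
  proof (intro allI impI)
    fix c i assume "(\<Sum>i<n. sc1 (c i) (b i)) = 0" "i < n"
    moreover have "V1.indep_family n m" using m V1.O_basis_iff by blast
    ultimately have "c i * inverse (w ^ k) = 0"
      using V1.indep_familyD[where c="\<lambda>i. c i * inverse (w ^ k)"] unfolding b_def by simp
    then show "c i = 0" using V1.w_nonzero by simp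
  qed
  moreover have "E1 ` M1 \<subseteq> V1.O_span n b"
  proof
    fix x assume "x \<in> E1 ` M1"
    then have "sc1 (w ^ k) x \<in> V1.O_span n m" using k m V1.O_basis_iff by blast
    then obtain c where c: "sc1 (w ^ k) x = (\<Sum>i<n. sc1 (c i) (m i))" "\<forall>i<n. c i \<in> Ov"
      unfolding V1.O_span_def by blast
    have "x = sc1 (inverse (w ^ k)) (sc1 (w ^ k) x)" using V1.w_nonzero by simp
    also have "\<dots> = (\<Sum>i<n. sc1 (c i) (b i))"
      unfolding c(1) b_def by (simp add: V1.scale_sum_right mult.commute)
    finally show "x \<in> V1.O_span n b" by (rule V1.O_spanI) (use c(2) in auto)
  qed
  ultimately show ?thesis using V1.O_submodule_has_O_basis E1M1_O_submodule by blast
qed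

lemma N1_O_basis: "\<exists>r b. O_basis Ov sc1 r b (E1 ` M1 \<inter> M1)"
proof -
  obtain n m where "O_basis Ov sc1 n m M1" using V1.full_O_lattice_O_basis[OF M1] by blast
  then show ?thesis
    using V1.O_submodule_has_O_basis[of n m] N1_O_submodule unfolding V1.O_basis_iff by blast
qed

lemma E1_in_E_span:
  assumes "O_basis Ov sc1 r b (E1 ` M1)"
  shows "E1 x \<in> V1.E_span r b"
proof -
  obtain k where "sc1 (w ^ k) x \<in> M1" using ex_scale_in_M1 by blast
  then have "E1 (sc1 (w ^ k) x) \<in> V1.E_span r b"
    using assms V1.O_span_subset_E_span unfolding V1.O_basis_iff by blast
  then have "sc1 (w ^ k) (E1 x) \<in> V1.E_span r b" by (simp only: E1_scale)
  then have "sc1 (inverse (w ^ k)) (sc1 (w ^ k) (E1 x)) \<in> V1.E_span r b" by (rule V1.E_span_scale)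
  then show ?thesis using V1.w_nonzero by simp
qed

lemma coord_eq_P_dual:
  assumes b: "V1.indep_family r b" "x \<in> V1.E_span r b"
    and dual: "\<forall>k<r. \<forall>i<r. P (b k) (y i) = (if k = i then 1 else 0)" and i: "i < r"
  shows "V1.coord r b i x = P x (y i)"
proof -
  have "P x (y i) = (\<Sum>j<r. V1.coord r b j x * P (b j) (y i))"
    by (subst V1.E_span_repr[OF b]) (rule P_sum_left)
  also have "\<dots> = (\<Sum>j<r. if j = i then V1.coord r b j x else 0)"
    using dual i by (intro sum.cong) auto
  finally show ?thesis using i by simp
qed

text \<open>The coordinate functionals of a basis of E1 ` M1, composed with E1, are integral on M1;
  perfectness represents them by elements of M2, which orthogonality then forces into E2 ` M2.\<close>

lemma dual_vector:
  assumes b: "O_basis Ov sc1 r b (E1 ` M1)" and i: "i < r"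
  obtains y where "y \<in> E2 ` M2 \<inter> M2" "\<forall>k<r. P (b k) y = (if k = i then 1 else 0)"
proof -
  interpret swapped: projected_pairing Ov v w sc2 sc1 M2 M1 "\<lambda>y x. P x y" E2 E1 by (rule swapped)
  have ind: "V1.indep_family r b" and EM: "E1 ` M1 = V1.O_span r b" using b V1.O_basis_iff by auto
  define f where "f m = V1.coord r b i (E1 m)" for m
  have f_scale: "f (sc1 a m) = a * f m" for a m
    unfolding f_def E1_scale using V1.coord_scale[OF ind i] E1_in_E_span[OF b] by blast
  have "O_linear_form Ov sc1 M1 f"
    unfolding O_linear_form_def
  proof (intro conjI ballI)
    fix m m' assume "m \<in> M1" "m' \<in> M1"
    show "f m \<in> Ov" unfolding f_def using EM V1.coord_in_Ov[OF ind i] \<open>m \<in> M1\<close> by blast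
    show "f (m + m') = f m + f m'"
      unfolding f_def E1_add using V1.coord_add[OF ind i] E1_in_E_span[OF b] by blast
  qed (rule f_scale)
  then obtain y where y: "y \<in> M2" "\<forall>x\<in>M1. P x y = f x"
    using P_perfect unfolding perfect_O_pairing_def by blast
  have P_E1: "P (E1 m) y = f m" if m: "m \<in> M1" for m
  proof -
    obtain k where k: "sc1 (w ^ k) (E1 m) \<in> M1" using E1_bounded m by blast
    have "w ^ k * P (E1 m) y = P (sc1 (w ^ k) (E1 m)) y" by (simp add: P_scale_left)
    also have "\<dots> = f (sc1 (w ^ k) (E1 m))" using y(2) k by blast
    also have "\<dots> = w ^ k * f (E1 m)" by (rule f_scale)
    also have "f (E1 m) = f m" unfolding f_def E1_idem ..
    finally show ?thesis using V1.w_nonzero by simp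
  qed
  have "y - E2 y = 0"
  proof (rule swapped.P_nondegenerate_left)
    fix x assume x: "x \<in> M1"
    have "P x (E2 y) = P (E1 x) y" using P_E2_right[of x y] P_E1_left[of x y] by simp
    then show "P x (y - E2 y) = 0" using P_E1[OF x] y(2) x by (simp add: P_diff_right)
  qed
  then have "y \<in> E2 ` M2 \<inter> M2" using y(1) swapped.N1_iff by simp
  moreover have "P (b k) y = (if k = i then 1 else 0)" if k: "k < r" for k
  proof -
    obtain m where "m \<in> M1" "b k = E1 m" using V1.family_in_O_span[OF k] EM by blast
    then show ?thesis using P_E1 V1.coord_family[OF ind k i] unfolding f_def by auto
  qed
  ultimately show ?thesis using that by blast
qed

lemma dual_family:
  assumes "O_basis Ov sc1 r b (E1 ` M1)"
  obtains y where "\<forall>i<r. y i \<in> E2 ` M2 \<inter> M2" "\<forall>k<r. \<forall>i<r. P (b k) (y i) = (if k = i then 1 else 0)"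
proof -
  define y where "y i = (SOME y. y \<in> E2 ` M2 \<inter> M2 \<and> (\<forall>k<r. P (b k) y = (if k = i then 1 else 0)))" for i
  have "y i \<in> E2 ` M2 \<inter> M2 \<and> (\<forall>k<r. P (b k) (y i) = (if k = i then 1 else 0))" if "i < r" for i
    unfolding y_def by (rule someI_ex) (use dual_vector[OF assms that] in blast)
  then show ?thesis using that by blast
qed

lemma rank_N1_le_rank_E1M1:
  assumes b: "O_basis Ov sc1 r b (E1 ` M1)" and b': "O_basis Ov sc1 r' b' (E1 ` M1 \<inter> M1)"
  shows "r' \<le> r"
proof (rule V1.indep_family_le)
  have EM: "E1 ` M1 = V1.O_span r b" and N1: "E1 ` M1 \<inter> M1 = V1.O_span r' b'"
    using b b' V1.O_basis_iff by simp_all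
  show "V1.indep_family r' b'" using b' V1.O_basis_iff by simp
  fix i assume "i < r'"
  then have "b' i \<in> E1 ` M1 \<inter> M1" using V1.family_in_O_span[of i r' b'] N1 by simp
  then show "b' i \<in> V1.E_span r b" using EM V1.O_span_subset_E_span by auto
qed

lemma rank_E1M1_le_rank_N2:
  assumes b: "O_basis Ov sc1 r b (E1 ` M1)" and c': "O_basis Ov sc2 s' c' (E2 ` M2 \<inter> M2)"
  shows "r \<le> s'"
proof -
  obtain y where y: "\<forall>i<r. y i \<in> E2 ` M2 \<inter> M2"
    and dual: "\<forall>k<r. \<forall>i<r. P (b k) (y i) = (if k = i then 1 else 0)"
    using dual_family[OF b] .
  have "V2.indep_family r y"
    unfolding V2.indep_family_def
  proof (intro allI impI)
    fix a k assume a: "(\<Sum>i<r. sc2 (a i) (y i)) = 0" and k: "k < r"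
    have "0 = P (b k) (\<Sum>i<r. sc2 (a i) (y i))" using a P_zero_right by simp
    also have "\<dots> = (\<Sum>i<r. a i * P (b k) (y i))" by (rule P_sum_right)
    also have "\<dots> = (\<Sum>i<r. if i = k then a i else 0)" using dual k by (intro sum.cong) auto
    finally show "a k = 0" using k by simp
  qed
  moreover have "E2 ` M2 \<inter> M2 = V2.O_span s' c'" using c' V2.O_basis_iff by simp
  ultimately show ?thesis
    using y by (intro V2.indep_family_le[where c=c']) (auto intro: subsetD[OF V2.O_span_subset_E_span])
qed

lemma ranks_eq:
  assumes b: "O_basis Ov sc1 r b (E1 ` M1)"
    and b': "O_basis Ov sc1 r' b' (E1 ` M1 \<inter> M1)" and c': "O_basis Ov sc2 s' c' (E2 ` M2 \<inter> M2)"
  shows "r' = r" "s' = r"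
proof -
  interpret swapped: projected_pairing Ov v w sc2 sc1 M2 M1 "\<lambda>y x. P x y" E2 E1 by (rule swapped)
  obtain s c where c: "O_basis Ov sc2 s c (E2 ` M2)" using swapped.E1M1_O_basis by blast
  have "r' \<le> r" "r \<le> s'" "s' \<le> s" "s \<le> r'"
    using rank_N1_le_rank_E1M1[OF b b'] rank_E1M1_le_rank_N2[OF b c']
      swapped.rank_N1_le_rank_E1M1[OF c c'] swapped.rank_E1M1_le_rank_N2[OF c b'] by simp_all
  then show "r' = r" "s' = r" by simp_all
qed

definition gram :: "nat \<Rightarrow> (nat \<Rightarrow> 'v) \<Rightarrow> (nat \<Rightarrow> 'w) \<Rightarrow> 'e mat" where
  "gram r x y = mat r r (\<lambda>(i, j). P (x i) (y j))"

lemma det_gram_comb_left: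
  assumes "\<forall>j<r. x j = (\<Sum>i<r. sc1 (A i j) (b i))"
  shows "det (gram r x y) = det (mat r r (\<lambda>(i, j). A i j)) * det (gram r b y)"
proof -
  let ?A = "mat r r (\<lambda>(i, j). A i j)"
  have "gram r x y = transpose_mat ?A * gram r b y"
  proof (rule eq_matI)
    fix j l assume "j < dim_row (transpose_mat ?A * gram r b y)" "l < dim_col (transpose_mat ?A * gram r b y)"
    then have jl: "j < r" "l < r" by (simp_all add: gram_def)
    have "(transpose_mat ?A * gram r b y) $$ (j, l) = (\<Sum>i<r. A i j * P (b i) (y l))"
      using jl by (simp add: gram_def scalar_prod_def lessThan_atLeast0)
    also have "\<dots> = gram r x y $$ (j, l)"
      using assms jl by (simp add: gram_def P_sum_left)
    finally show "gram r x y $$ (j, l) = (transpose_mat ?A * gram r b y) $$ (j, l)" ..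
  qed (simp_all add: gram_def)
  then show ?thesis
    using det_mult[of "transpose_mat ?A" r "gram r b y"] det_transpose[of ?A r] by (simp add: gram_def)
qed

lemma det_gram_comb_right:
  assumes "\<forall>j<r. y j = (\<Sum>i<r. sc2 (B i j) (c i))"
  shows "det (gram r x y) = det (gram r x c) * det (mat r r (\<lambda>(i, j). B i j))"
proof -
  let ?B = "mat r r (\<lambda>(i, j). B i j)"
  have "gram r x y = gram r x c * ?B"
  proof (rule eq_matI)
    fix j l assume "j < dim_row (gram r x c * ?B)" "l < dim_col (gram r x c * ?B)"
    then have jl: "j < r" "l < r" by (simp_all add: gram_def)
    have "(gram r x c * ?B) $$ (j, l) = (\<Sum>i<r. P (x j) (c i) * B i l)"
      using jl by (simp add: gram_def scalar_prod_def lessThan_atLeast0)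
    also have "\<dots> = gram r x y $$ (j, l)"
      using assms jl by (simp add: gram_def P_sum_right mult.commute)
    finally show "gram r x y $$ (j, l) = (gram r x c * ?B) $$ (j, l)" ..
  qed (simp_all add: gram_def)
  then show ?thesis by (simp add: det_mult[of _ r] gram_def)
qed

lemma P_N1_E2M2_in_Ov: "x \<in> E1 ` M1 \<inter> M1 \<Longrightarrow> y \<in> E2 ` M2 \<Longrightarrow> P x y \<in> Ov"
proof -
  assume x: "x \<in> E1 ` M1 \<inter> M1" and "y \<in> E2 ` M2"
  then obtain m where m: "m \<in> M2" "y = E2 m" by blast
  have "P x y = P (E1 x) (E2 m)" using m(2) P_E2_right[of x m] by simp
  also have "\<dots> = P (E1 x) m" using P_E1_left[of x m] by simp
  also have "\<dots> = P x m" using x N1_iff by simp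
  finally show ?thesis using P_in_Ov x m(1) by simp
qed

text \<open>Pairing a basis of E1 ` M1 with the dual family inside E2 ` M2 \<inter> M2 gives the identity; the
  coordinate matrix of that family is integral, so the Gram determinant is invertible in Ov.\<close>

lemma gram_det_unit:
  assumes b: "O_basis Ov sc1 r b (E1 ` M1)" and c: "O_basis Ov sc2 r c (E2 ` M2 \<inter> M2)"
  shows "V1.Ov_unit (det (gram r b c))"
proof -
  interpret swapped: projected_pairing Ov v w sc2 sc1 M2 M1 "\<lambda>y x. P x y" E2 E1 by (rule swapped)
  have EM: "E1 ` M1 = V1.O_span r b" using b V1.O_basis_iff by simp
  have ind: "V2.indep_family r c" and N2: "E2 ` M2 \<inter> M2 = V2.O_span r c" using c V2.O_basis_iff by simp_all
  obtain y where y: "\<forall>i<r. y i \<in> E2 ` M2 \<inter> M2"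
    and dual: "\<forall>k<r. \<forall>i<r. P (b k) (y i) = (if k = i then 1 else 0)"
    using dual_family[OF b] .
  have yO: "y i \<in> V2.O_span r c" if "i < r" for i using y that N2 by simp
  define Y where "Y = mat r r (\<lambda>(l, i). V2.coord r c l (y i))"
  have "\<forall>i<r. y i = (\<Sum>l<r. sc2 (V2.coord r c l (y i)) (c l))"
    using yO V2.E_span_repr[OF ind] subsetD[OF V2.O_span_subset_E_span] by simp
  then have "det (gram r b y) = det (gram r b c) * det Y"
    unfolding Y_def by (rule det_gram_comb_right)
  moreover have "gram r b y = 1\<^sub>m r" by (rule eq_matI) (use dual in \<open>auto simp: gram_def\<close>)
  ultimately have "det (gram r b c) * det Y = 1" by simp
  moreover have "det Y \<in> Ov"
    by (rule V1.det_in_Ov[of _ r]) (simp_all add: Y_def V2.coord_in_Ov[OF ind] yO)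
  moreover have "det (gram r b c) \<in> Ov"
  proof (rule V1.det_in_Ov[of _ r])
    fix i k assume ik: "i < r" "k < r"
    then have "b i \<in> E1 ` M1" "c k \<in> E2 ` M2 \<inter> M2"
      using EM N2 V1.family_in_O_span[of i r b] V2.family_in_O_span[of k r c] by simp_all
    then show "gram r b c $$ (i, k) \<in> Ov"
      using swapped.P_N1_E2M2_in_Ov ik by (simp add: gram_def)
  qed (simp add: gram_def)
  ultimately show ?thesis using V1.Ov_unitI by blast
qed

lemma in_N1_if_integral_on_E2M2: "x \<in> E1 ` M1 \<Longrightarrow> (\<forall>y\<in>E2 ` M2. P x y \<in> Ov) \<Longrightarrow> x \<in> E1 ` M1 \<inter> M1"
proof -
  assume x: "x \<in> E1 ` M1" and integral: "\<forall>y\<in>E2 ` M2. P x y \<in> Ov"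
  then obtain m where m: "x = E1 m" by blast
  have "P x y \<in> Ov" if "y \<in> M2" for y
    using integral that P_E1_left[of m y] m by simp
  then show ?thesis using x in_M1_if_integral_on_M2 by blast
qed

lemma in_E1M1_if_integral_on_N2:
  assumes "E1 x = x" "\<forall>y\<in>E2 ` M2 \<inter> M2. P x y \<in> Ov"
  shows "x \<in> E1 ` M1"
proof -
  obtain r b where b: "O_basis Ov sc1 r b (E1 ` M1)" using E1M1_O_basis by blast
  then have ind: "V1.indep_family r b" and EM: "E1 ` M1 = V1.O_span r b" using V1.O_basis_iff by simp_all
  obtain y where y: "\<forall>i<r. y i \<in> E2 ` M2 \<inter> M2"
    and dual: "\<forall>k<r. \<forall>i<r. P (b k) (y i) = (if k = i then 1 else 0)"
    using dual_family[OF b] .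
  have xE: "x \<in> V1.E_span r b" using E1_in_E_span[OF b, of x] assms(1) by simp
  have "V1.coord r b i x \<in> Ov" if "i < r" for i
    using coord_eq_P_dual[OF ind xE dual that] assms(2) y that by simp
  then show ?thesis unfolding EM V1.O_span_iff[OF ind] using xE by blast
qed

text \<open>The representing element combines the dual family of a basis c of E2 ` M2 with the
  coefficients f (c k).\<close>

lemma hom_quot_representable:
  assumes f: "hom_quot_to_E_mod_O Ov sc2 (E2 ` M2) (E2 ` M2 \<inter> M2) f"
  shows "\<exists>x\<in>E1 ` M1. \<forall>y\<in>E2 ` M2. P x y - f y \<in> Ov"
proof -
  interpret swapped: projected_pairing Ov v w sc2 sc1 M2 M1 "\<lambda>y x. P x y" E2 E1 by (rule swapped)
  obtain s c where c: "O_basis Ov sc2 s c (E2 ` M2)" using swapped.E1M1_O_basis by blast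
  then have ind: "V2.indep_family s c" and EM2: "E2 ` M2 = V2.O_span s c" using V2.O_basis_iff by simp_all
  obtain x where x: "\<forall>k<s. x k \<in> E1 ` M1 \<inter> M1"
    and dual: "\<forall>l<s. \<forall>k<s. P (x k) (c l) = (if l = k then 1 else 0)"
    using swapped.dual_family[OF c] by auto
  define x0 where "x0 = (\<Sum>k<s. sc1 (f (c k)) (x k))"
  have P_x0: "P x0 y - f y \<in> Ov" if y: "y \<in> E2 ` M2" for y
  proof -
    have yE: "y \<in> V2.E_span s c" using y EM2 V2.O_span_subset_E_span by auto
    have "P x0 y = (\<Sum>k<s. f (c k) * P (x k) y)" unfolding x0_def by (rule P_sum_left)
    also have "\<dots> = (\<Sum>k<s. V2.coord s c k y * f (c k))"
      using swapped.coord_eq_P_dual[OF ind yE] dual by (intro sum.cong) auto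
    finally have "P x0 y = (\<Sum>k<s. V2.coord s c k y * f (c k))" .
    moreover have "f (\<Sum>k<s. sc2 (V2.coord s c k y) (c k)) - (\<Sum>k<s. V2.coord s c k y * f (c k)) \<in> Ov"
      using V2.coord_in_Ov[OF ind] y EM2 V2.family_in_O_span swapped.E1M1_O_submodule
      by (intro V2.hom_quot_to_E_mod_O_sum[OF f]) auto
    ultimately have "- (P x0 y - f y) \<in> Ov" using V2.E_span_repr[OF ind yE] by simp
    then show ?thesis using V1.Ov_uminus by fastforce
  qed
  have "E1 x0 = x0" using x unfolding x0_def E1_sum N1_iff by simp
  moreover have "P x0 y \<in> Ov" if "y \<in> E2 ` M2 \<inter> M2" for y
    using P_x0[of y] f that V1.Ov_add[of "P x0 y - f y" "f y"] unfolding hom_quot_to_E_mod_O_def by auto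
  ultimately have "x0 \<in> E1 ` M1" using in_E1M1_if_integral_on_N2 by blast
  then show ?thesis using P_x0 by blast
qed

lemma perfect_E_mod_O:
  "perfect_E_mod_O_pairing Ov sc1 sc2 (E1 ` M1) (E1 ` M1 \<inter> M1) (E2 ` M2) (E2 ` M2 \<inter> M2) P"
proof -
  interpret swapped: projected_pairing Ov v w sc2 sc1 M2 M1 "\<lambda>y x. P x y" E2 E1 by (rule swapped)
  show ?thesis
    unfolding perfect_E_mod_O_pairing_def
  proof (intro conjI ballI allI impI)
    show "P x y \<in> Ov" if "x \<in> E1 ` M1 \<inter> M1" "y \<in> E2 ` M2" for x y
      using P_N1_E2M2_in_Ov that .
    show "P x y \<in> Ov" if "x \<in> E1 ` M1" "y \<in> E2 ` M2 \<inter> M2" for x y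
      using swapped.P_N1_E2M2_in_Ov that by simp
    show "x \<in> E1 ` M1 \<inter> M1" if "x \<in> E1 ` M1" "\<forall>y\<in>E2 ` M2. P x y \<in> Ov" for x
      using in_N1_if_integral_on_E2M2 that .
    show "y \<in> E2 ` M2 \<inter> M2" if "y \<in> E2 ` M2" "\<forall>x\<in>E1 ` M1. P x y \<in> Ov" for y
      using swapped.in_N1_if_integral_on_E2M2 that by simp
    show "\<exists>x\<in>E1 ` M1. \<forall>y\<in>E2 ` M2. P x y - f y \<in> Ov"
      if "hom_quot_to_E_mod_O Ov sc2 (E2 ` M2) (E2 ` M2 \<inter> M2) f" for f
      using hom_quot_representable that .
    show "\<exists>y\<in>E2 ` M2. \<forall>x\<in>E1 ` M1. P x y - f x \<in> Ov"
      if "hom_quot_to_E_mod_O Ov sc1 (E1 ` M1) (E1 ` M1 \<inter> M1) f" for f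
      using swapped.hom_quot_representable that by simp
  qed
qed

lemma fitting_ideal_subset_gram_det:
  assumes b': "O_basis Ov sc1 r b' (E1 ` M1 \<inter> M1)" and c': "O_basis Ov sc2 r c' (E2 ` M2 \<inter> M2)"
  shows "fitting_ideal_quot Ov sc1 (E1 ` M1) (E1 ` M1 \<inter> M1) \<subseteq> O_mult Ov (det (gram r b' c'))"
proof
  fix x assume "x \<in> fitting_ideal_quot Ov sc1 (E1 ` M1) (E1 ` M1 \<inter> M1)"
  then obtain r0 b d A a where b: "O_basis Ov sc1 r0 b (E1 ` M1)" and d: "O_basis Ov sc1 r0 d (E1 ` M1 \<inter> M1)"
    and dA: "\<forall>j<r0. d j = (\<Sum>i<r0. sc1 (A i j) (b i))" and a: "a \<in> Ov"
    and x: "x = a * det (mat r0 r0 (\<lambda>(i, j). A i j))"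
    unfolding fitting_ideal_quot_def by blast
  have r0: "r0 = r" using ranks_eq(1)[OF b b' c'] by simp
  have ind': "V1.indep_family r b'" and N1: "E1 ` M1 \<inter> M1 = V1.O_span r b'"
    using b' V1.O_basis_iff by simp_all
  have dO: "d j \<in> V1.O_span r b'" if "j < r" for j
    using d N1 V1.family_in_O_span[OF that] unfolding r0 V1.O_basis_iff by simp
  define U where "U = mat r r (\<lambda>(i, j). V1.coord r b' i (d j))"
  have "\<forall>j<r. d j = (\<Sum>i<r. sc1 (V1.coord r b' i (d j)) (b' i))"
    using dO V1.E_span_repr[OF ind'] subsetD[OF V1.O_span_subset_E_span] by simp
  then have "det (gram r d c') = det U * det (gram r b' c')"
    unfolding U_def by (rule det_gram_comb_left)
  moreover have "det (gram r d c') = det (mat r r (\<lambda>(i, j). A i j)) * det (gram r b c')"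
    using dA unfolding r0 by (rule det_gram_comb_left)
  moreover have g: "V1.Ov_unit (det (gram r b c'))" using gram_det_unit b c' unfolding r0 by blast
  ultimately have eq: "a * det (mat r r (\<lambda>(i, j). A i j))
      = (a * det U * inverse (det (gram r b c'))) * det (gram r b' c')"
    unfolding V1.Ov_unit_def by (simp add: field_simps)
  have "det U \<in> Ov"
    by (rule V1.det_in_Ov[of _ r]) (simp_all add: U_def V1.coord_in_Ov[OF ind'] dO)
  then have "a * det U * inverse (det (gram r b c')) \<in> Ov"
    using a g unfolding V1.Ov_unit_def by (intro V1.Ov_mult) auto
  then show "x \<in> O_mult Ov (det (gram r b' c'))" unfolding x r0 O_mult_def eq by (rule imageI)
qed

lemma gram_det_subset_fitting_ideal:
  assumes b': "O_basis Ov sc1 r b' (E1 ` M1 \<inter> M1)" and c': "O_basis Ov sc2 r c' (E2 ` M2 \<inter> M2)"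
  shows "O_mult Ov (det (gram r b' c')) \<subseteq> fitting_ideal_quot Ov sc1 (E1 ` M1) (E1 ` M1 \<inter> M1)"
proof
  fix x assume "x \<in> O_mult Ov (det (gram r b' c'))"
  then obtain a where a: "a \<in> Ov" and x: "x = a * det (gram r b' c')" unfolding O_mult_def by blast
  obtain r0 b where b0: "O_basis Ov sc1 r0 b (E1 ` M1)" using E1M1_O_basis by blast
  then have b: "O_basis Ov sc1 r b (E1 ` M1)" using ranks_eq(1)[OF b0 b' c'] by simp
  then have ind: "V1.indep_family r b" and EM: "E1 ` M1 = V1.O_span r b" using V1.O_basis_iff by simp_all
  define A where "A i j = V1.coord r b i (b' j)" for i j
  have "b' j \<in> V1.E_span r b" if "j < r" for j
  proof -
    have "b' j \<in> E1 ` M1 \<inter> M1" using b' V1.family_in_O_span[OF that] unfolding V1.O_basis_iff by simp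
    then show ?thesis using EM V1.O_span_subset_E_span by auto
  qed
  then have b'A: "\<forall>j<r. b' j = (\<Sum>i<r. sc1 (A i j) (b i))"
    unfolding A_def using V1.E_span_repr[OF ind] by simp
  then have "det (gram r b' c') = det (mat r r (\<lambda>(i, j). A i j)) * det (gram r b c')"
    by (rule det_gram_comb_left)
  moreover have "V1.Ov_unit (det (gram r b c'))" using gram_det_unit b c' by blast
  ultimately have "x = (a * det (gram r b c')) * det (mat r r (\<lambda>(i, j). A i j))"
    and "a * det (gram r b c') \<in> Ov"
    using a x unfolding V1.Ov_unit_def by (auto intro: V1.Ov_mult)
  then show "x \<in> fitting_ideal_quot Ov sc1 (E1 ` M1) (E1 ` M1 \<inter> M1)"
    using b b' b'A unfolding fitting_ideal_quot_def by blast
qed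

text \<open>The right-hand side is symmetric in the two sides of the pairing.\<close>

lemma fitting_ideal_eq_gram_det:
  assumes "O_basis Ov sc1 r b' (E1 ` M1 \<inter> M1)" "O_basis Ov sc2 r c' (E2 ` M2 \<inter> M2)"
  shows "fitting_ideal_quot Ov sc1 (E1 ` M1) (E1 ` M1 \<inter> M1) = O_mult Ov (det (gram r b' c'))"
  using fitting_ideal_subset_gram_det[OF assms] gram_det_subset_fitting_ideal[OF assms] by blast

lemma fitting_ideals_eq:
  "fitting_ideal_quot Ov sc1 (E1 ` M1) (E1 ` M1 \<inter> M1) = fitting_ideal_quot Ov sc2 (E2 ` M2) (E2 ` M2 \<inter> M2)"
proof -
  interpret swapped: projected_pairing Ov v w sc2 sc1 M2 M1 "\<lambda>y x. P x y" E2 E1 by (rule swapped)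
  obtain r0 b where b: "O_basis Ov sc1 r0 b (E1 ` M1)" using E1M1_O_basis by blast
  obtain r b' where b': "O_basis Ov sc1 r b' (E1 ` M1 \<inter> M1)" using N1_O_basis by blast
  obtain s c' where c': "O_basis Ov sc2 s c' (E2 ` M2 \<inter> M2)" using swapped.N1_O_basis by blast
  have c': "O_basis Ov sc2 r c' (E2 ` M2 \<inter> M2)" using c' ranks_eq[OF b b' c'] by simp
  have "swapped.gram r c' b' = transpose_mat (gram r b' c')"
    by (rule eq_matI) (simp_all add: gram_def swapped.gram_def)
  then have "det (swapped.gram r c' b') = det (gram r b' c')"
    using det_transpose[of "gram r b' c'" r] by (simp add: gram_def)
  then show ?thesis
    using fitting_ideal_eq_gram_det[OF b' c'] swapped.fitting_ideal_eq_gram_det[OF c' b'] by simp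
qed

lemma fitting_ideal_rank_one:
  assumes "O_basis Ov sc1 1 (\<lambda>_. d1) (E1 ` M1 \<inter> M1)" "O_basis Ov sc2 1 (\<lambda>_. d2) (E2 ` M2 \<inter> M2)"
  shows "fitting_ideal_quot Ov sc1 (E1 ` M1) (E1 ` M1 \<inter> M1) = O_mult Ov (P d1 d2)"
  using fitting_ideal_eq_gram_det[OF assms] by (simp add: gram_def det_single)

end

section \<open>Idempotent actions on lattice modules\<close>

lemma ring_hom_funD:
  assumes "ring_hom_fun iota"
  shows "iota 1 = 1" "iota (a + b) = iota a + iota b" "iota (a * b) = iota a * iota b" "iota 0 = 0"
proof -
  show "iota 1 = 1" "iota (a + b) = iota a + iota b" "iota (a * b) = iota a * iota b"
    using assms unfolding ring_hom_fun_def by blast+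
  have "iota (0 + 0) = iota 0 + iota 0" using assms unfolding ring_hom_fun_def by blast
  then show "iota 0 = 0" by simp
qed

lemma vector_space_ring_hom_action:
  fixes iota :: "'e::field \<Rightarrow> 'a::comm_ring_1" and act :: "'a \<Rightarrow> 'v::ab_group_add \<Rightarrow> 'v"
  assumes "ring_hom_fun iota" "Modules.module act"
  shows "vector_space (\<lambda>c m. act (iota c) m)"
proof -
  interpret Modules.module act by fact
  show ?thesis
    by unfold_locales (simp_all add: ring_hom_funD[OF assms(1)] scale_right_distrib scale_left_distrib)
qed

lemma lattice_module_lattice_space:
  assumes "valuation_ring Ov v w" and T: "reduced_finite_flat_local_algebra Ov iota T"
    and M: "lattice_module Ov iota T act M"
  shows "lattice_space Ov v w (\<lambda>c m. act (iota c) m)"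
proof (intro lattice_space.intro assms(1) vector_space_ring_hom_action)
  show "ring_hom_fun iota" using T unfolding reduced_finite_flat_local_algebra_def by blast
  show "Modules.module act" using M unfolding lattice_module_def by blast
qed

lemma ex_power_w_mult_in_algebra:
  fixes iota :: "'e::field \<Rightarrow> 'a::comm_ring_1"
  assumes "valuation_ring Ov v w" and T: "reduced_finite_flat_local_algebra Ov iota T"
  shows "\<exists>k. iota (w ^ k) * x \<in> T"
proof -
  have "Modules.module (\<lambda>a (x::'a). a * x)" by unfold_locales (simp_all add: algebra_simps)
  moreover have "ring_hom_fun iota" using T unfolding reduced_finite_flat_local_algebra_def by blast
  ultimately interpret lattice_space Ov v w "\<lambda>c x. iota c * x"
    by (intro lattice_space.intro assms(1) vector_space_ring_hom_action)
  show ?thesis by (rule full_O_lattice_ex_scale_in) (use T in \<open>simp add: reduced_finite_flat_local_algebra_def\<close>)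
qed

lemma lambda_idempotent_annihilator:
  fixes iota :: "'e::field \<Rightarrow> 'a::comm_ring_1"
  assumes "ring_hom_fun iota" "lambda_idempotent iota T lam e" "t \<in> T" "e * t = 0"
  shows "lam t = 0"
proof (rule ccontr)
  note iota = ring_hom_funD[OF assms(1)]
  assume "lam t \<noteq> 0"
  then have "e = iota (inverse (lam t)) * (iota (lam t) * e)"
    by (simp add: iota(3)[symmetric] mult.assoc[symmetric] iota(1))
  also have "iota (lam t) * e = 0" using assms(2-4) unfolding lambda_idempotent_def by simp
  finally show False using assms(2) unfolding lambda_idempotent_def by simp
qed

text \<open>For M[ker lam] \<subseteq> eM \<inter> M use that c (1 - e) lies in T and in the kernel of lam as soon as
  c e \<in> T.\<close>

lemma ker_torsion_eq_eM_inter: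
  assumes "valuation_ring Ov v w" and T: "reduced_finite_flat_local_algebra Ov iota T"
    and e: "lambda_idempotent iota T lam e" and M: "lattice_module Ov iota T act M"
  shows "ker_torsion T lam act M = act e ` M \<inter> M"
proof
  interpret valuation_ring Ov v w by fact
  have hom: "ring_hom_fun iota" and T_closed: "\<And>x y. x \<in> T \<Longrightarrow> y \<in> T \<Longrightarrow> x + y \<in> T"
    "\<And>x. x \<in> T \<Longrightarrow> - x \<in> T" "\<And>a t. a \<in> Ov \<Longrightarrow> t \<in> T \<Longrightarrow> iota a * t \<in> T" "1 \<in> T"
    using T unfolding reduced_finite_flat_local_algebra_def by auto
  note iota = ring_hom_funD[OF hom]
  interpret Modules.module act using M unfolding lattice_module_def by blast
  have ee: "e * e = e" "\<And>t. t \<in> T \<Longrightarrow> e * t = iota (lam t) * e"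
    using e unfolding lambda_idempotent_def by auto
  show "act e ` M \<inter> M \<subseteq> ker_torsion T lam act M"
  proof
    fix m assume "m \<in> act e ` M \<inter> M"
    then obtain m0 where m: "m \<in> M" "m = act e m0" by blast
    have "act t m = act (iota (lam t) * e) m0" if "t \<in> T" for t
      using m(2) ee(2)[OF that] by (simp add: mult.commute)
    then show "m \<in> ker_torsion T lam act M" unfolding ker_torsion_def using m(1) iota by simp
  qed
  show "ker_torsion T lam act M \<subseteq> act e ` M \<inter> M"
  proof
    fix m assume "m \<in> ker_torsion T lam act M"
    then have m: "m \<in> M" "\<And>t. t \<in> T \<Longrightarrow> lam t = 0 \<Longrightarrow> act t m = 0"
      unfolding ker_torsion_def by auto
    obtain k where k: "iota (w ^ k) * e \<in> T" using ex_power_w_mult_in_algebra[OF assms(1,2)] by blast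
    define t where "t = iota (w ^ k) * 1 + - (iota (w ^ k) * e)"
    have tT: "t \<in> T" unfolding t_def using T_closed k Ov_power[OF Ov_w] by blast
    have "e * t = iota (w ^ k) * (e - e * e)" unfolding t_def by (simp add: algebra_simps)
    then have "lam t = 0" using lambda_idempotent_annihilator[OF hom e tT] ee(1) by simp
    moreover have "act t m = act (iota (w ^ k)) (m - act e m)"
      unfolding t_def by (simp add: scale_left_diff_distrib scale_right_diff_distrib)
    ultimately have "act (iota (w ^ k)) (m - act e m) = 0" using m(2)[OF tT] by simp
    then have "act (iota (inverse (w ^ k))) (act (iota (w ^ k)) (m - act e m)) = 0" by simp
    then have "m - act e m = 0" using w_nonzero by (simp add: iota(3)[symmetric] iota(1))
    then show "m \<in> act e ` M \<inter> M" using m(1) by (metis eq_iff_diff_eq_0 IntI image_eqI)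
  qed
qed

lemma projected_pairing_of_idempotents:
  fixes iota1 :: "'e::field \<Rightarrow> 'a::comm_ring_1" and iota2 :: "'e \<Rightarrow> 'b::comm_ring_1"
    and act1 :: "'a \<Rightarrow> 'v::ab_group_add \<Rightarrow> 'v" and act2 :: "'b \<Rightarrow> 'w::ab_group_add \<Rightarrow> 'w"
  assumes dvr: "valuation_ring Ov v w"
    and T1: "reduced_finite_flat_local_algebra Ov iota1 T1" and T2: "reduced_finite_flat_local_algebra Ov iota2 T2"
    and e1: "e1 * e1 = e1" and e2: "e2 * e2 = e2"
    and M1: "lattice_module Ov iota1 T1 act1 M1" and M2: "lattice_module Ov iota2 T2 act2 M2"
    and P_bil: "E_bilinear (\<lambda>c m. act1 (iota1 c) m) (\<lambda>c m. act2 (iota2 c) m) P"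
    and P_perf: "perfect_O_pairing Ov (\<lambda>c m. act1 (iota1 c) m) (\<lambda>c m. act2 (iota2 c) m) M1 M2 P"
    and orth1: "\<forall>x\<in>M1. \<forall>y\<in>M2. P (act1 e1 x) (act2 (1 - e2) y) = 0"
    and orth2: "\<forall>x\<in>M1. \<forall>y\<in>M2. P (act1 (1 - e1) x) (act2 e2 y) = 0"
  shows "projected_pairing Ov v w (\<lambda>c m. act1 (iota1 c) m) (\<lambda>c m. act2 (iota2 c) m) M1 M2 P (act1 e1) (act2 e2)"
proof -
  interpret A1: Modules.module act1 using M1 unfolding lattice_module_def by blast
  interpret A2: Modules.module act2 using M2 unfolding lattice_module_def by blast
  obtain k1 where "iota1 (w ^ k1) * e1 \<in> T1" using ex_power_w_mult_in_algebra[OF dvr T1] by blast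
  then have k1: "\<forall>m\<in>M1. act1 (iota1 (w ^ k1)) (act1 e1 m) \<in> M1" using M1 unfolding lattice_module_def by simp
  obtain k2 where "iota2 (w ^ k2) * e2 \<in> T2" using ex_power_w_mult_in_algebra[OF dvr T2] by blast
  then have k2: "\<forall>m\<in>M2. act2 (iota2 (w ^ k2)) (act2 e2 m) \<in> M2" using M2 unfolding lattice_module_def by simp
  show ?thesis
  proof (intro projected_pairing.intro lattice_module_lattice_space[OF dvr T1 M1]
      lattice_module_lattice_space[OF dvr T2 M2] projected_pairing_axioms.intro)
    show "full_O_lattice Ov (\<lambda>c m. act1 (iota1 c) m) M1" "full_O_lattice Ov (\<lambda>c m. act2 (iota2 c) m) M2"
      using M1 M2 unfolding lattice_module_def by simp_all
    show "\<exists>k. \<forall>m\<in>M1. act1 (iota1 (w ^ k)) (act1 e1 m) \<in> M1" "\<exists>k. \<forall>m\<in>M2. act2 (iota2 (w ^ k)) (act2 e2 m) \<in> M2"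
      using k1 k2 by blast+
    show "\<forall>x\<in>M1. \<forall>y\<in>M2. P (act1 e1 x) (y - act2 e2 y) = 0"
      using orth1 by (simp add: A2.scale_left_diff_distrib)
    show "\<forall>x\<in>M1. \<forall>y\<in>M2. P (x - act1 e1 x) (act2 e2 y) = 0"
      using orth2 by (simp add: A1.scale_left_diff_distrib)
  qed (simp_all add: A1.scale_right_distrib A2.scale_right_distrib mult.commute e1 e2 P_bil P_perf)
qed

theorem mainTheorem10:
  fixes Ov :: "'e::field set"
    and iota1 :: "'e \<Rightarrow> 'a::comm_ring_1" and T1 :: "'a set" and lam1 :: "'a \<Rightarrow> 'e" and e1 :: 'a
    and iota2 :: "'e \<Rightarrow> 'b::comm_ring_1" and T2 :: "'b set" and lam2 :: "'b \<Rightarrow> 'e" and e2 :: 'b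
    and act1 :: "'a \<Rightarrow> 'v::ab_group_add \<Rightarrow> 'v" and M1 :: "'v set"
    and act2 :: "'b \<Rightarrow> 'w::ab_group_add \<Rightarrow> 'w" and M2 :: "'w set"
    and P :: "'v \<Rightarrow> 'w \<Rightarrow> 'e"
  defines "sc1 \<equiv> \<lambda>c m. act1 (iota1 c) m"
    and "sc2 \<equiv> \<lambda>c m. act2 (iota2 c) m"
  assumes Ov_dvr: "complete_dvr Ov"
    and T1: "reduced_finite_flat_local_algebra Ov iota1 T1"
    and T2: "reduced_finite_flat_local_algebra Ov iota2 T2"
    and lam1: "O_algebra_hom_to_O Ov iota1 T1 lam1"
    and lam2: "O_algebra_hom_to_O Ov iota2 T2 lam2"
    and e1: "lambda_idempotent iota1 T1 lam1 e1"
    and e2: "lambda_idempotent iota2 T2 lam2 e2"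
    and M1: "lattice_module Ov iota1 T1 act1 M1"
    and M2: "lattice_module Ov iota2 T2 act2 M2"
    and P_bil: "E_bilinear sc1 sc2 P"
    and P_perf: "perfect_O_pairing Ov sc1 sc2 M1 M2 P"
    and orth1: "\<forall>x\<in>M1. \<forall>y\<in>M2. P (act1 e1 x) (act2 (1 - e2) y) = 0"
    and orth2: "\<forall>x\<in>M1. \<forall>y\<in>M2. P (act1 (1 - e1) x) (act2 e2 y) = 0"
  shows "perfect_E_mod_O_pairing Ov sc1 sc2
            (eM act1 e1 M1) (eM act1 e1 M1 \<inter> M1) (eM act2 e2 M2) (eM act2 e2 M2 \<inter> M2) P
         \<and> congruence_eta Ov iota1 act1 e1 M1 = congruence_eta Ov iota2 act2 e2 M2
         \<and> (\<forall>d1 d2. O_basis Ov sc1 1 (\<lambda>_. d1) (ker_torsion T1 lam1 act1 M1) \<and>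
                    O_basis Ov sc2 1 (\<lambda>_. d2) (ker_torsion T2 lam2 act2 M2) \<longrightarrow>
              congruence_eta Ov iota1 act1 e1 M1 = O_mult Ov (P d1 d2) \<and>
              congruence_eta Ov iota2 act2 e2 M2 = O_mult Ov (P d1 d2))"
proof -
  obtain v w where dvr: "valuation_ring Ov v w"
    using Ov_dvr unfolding complete_dvr_def valuation_ring_def by blast
  have ker: "ker_torsion T1 lam1 act1 M1 = act1 e1 ` M1 \<inter> M1" "ker_torsion T2 lam2 act2 M2 = act2 e2 ` M2 \<inter> M2"
    using ker_torsion_eq_eM_inter[OF dvr T1 e1 M1] ker_torsion_eq_eM_inter[OF dvr T2 e2 M2] .
  have eta: "congruence_eta Ov iota1 act1 e1 M1 = fitting_ideal_quot Ov sc1 (act1 e1 ` M1) (act1 e1 ` M1 \<inter> M1)"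
    "congruence_eta Ov iota2 act2 e2 M2 = fitting_ideal_quot Ov sc2 (act2 e2 ` M2) (act2 e2 ` M2 \<inter> M2)"
    unfolding congruence_eta_def eM_def sc1_def sc2_def by simp_all
  interpret projected_pairing Ov v w sc1 sc2 M1 M2 P "act1 e1" "act2 e2"
    using projected_pairing_of_idempotents[OF dvr T1 T2 _ _ M1 M2] e1 e2 P_bil P_perf orth1 orth2
    unfolding lambda_idempotent_def sc1_def sc2_def by blast
  show ?thesis
    using perfect_E_mod_O fitting_ideals_eq fitting_ideal_rank_one unfolding ker eta eM_def by simp
qed

end
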